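(* Under the standing setup below, if $\beta_n\to\infty$ and $\beta_nn^{-\alpha}\to0$, then $Z_n/\mathbb E[Z_n]\to1$ in probability and $\dfrac{Z_n}{C(q)\,n\,\beta_n^{-1/\alpha}\,\Gamma(\frac1\alpha+1)}\to1$ in probability.
   Context: Standing setup: Fix an integer $d\ge 2$; let $\mathbb S^{d-1}\subset\mathbb R^d$ be the unit sphere with surface measure $\sigma$. Fix $q\in\mathbb S^{d-1}$. Let $x_1,x_2,\dots$ be i.i.d. random vectors on $\mathbb S^{d-1}$ with law $\rho(x)\,d\sigma(x)$, where $\rho$ is a $C^2$ probability density on $\mathbb S^{d-1}$ with $\rho(q)>0$. Let $(\beta_n)$ be positive reals, $\alpha=2/(d-1)$, $T_i=1-\langle q,x_i\rangle$, $Z_n=\sum_{j=1}^ne^{-\beta_nT_j}$, and $C(q)=\frac{2^{1/\alpha}\sigma_{d-2}}{d-1}\rho(q)$ with $\sigma_{d-2}$ the surface area of $\mathbb S^{d-2}$. *)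

theory Defs
  imports "HOL-Probability.Probability"
begin

text \<open>Surface measure on the unit sphere of the Euclidean space 'a, obtained via the
  cone construction: sigma(A) = d * Leb{t x : x in A, 0 < t <= 1}, i.e. d times the
  push-forward of Lebesgue measure on the closed unit ball under x |-> x/|x|.\<close>
definition sphere_surface_measure :: "('a::euclidean_space) measure" where
  "sphere_surface_measure =
     scale_measure (ennreal (real DIM('a)))
       (distr (density lborel (indicator (cball 0 1))) borel sgn)"

text \<open>Surface area of the unit sphere S^{k} in R^{k+1}: (k+1) times the volume of the
  unit ball in R^{k+1}.\<close>
definition sphere_area :: "nat \<Rightarrow> real" where
  "sphere_area k = real (k + 1) * unit_ball_vol (real (k + 1))"

definition C2_on :: "('a::euclidean_space) set \<Rightarrow> ('a \<Rightarrow> real) \<Rightarrow> bool" where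
  "C2_on U g \<longleftrightarrow> (\<exists>D :: 'a \<Rightarrow> ('a \<Rightarrow>\<^sub>L real). \<exists>D2 :: 'a \<Rightarrow> ('a \<Rightarrow>\<^sub>L ('a \<Rightarrow>\<^sub>L real)).
      (\<forall>x\<in>U. (g has_derivative blinfun_apply (D x)) (at x)) \<and>
      (\<forall>x\<in>U. (D has_derivative blinfun_apply (D2 x)) (at x)) \<and>
      continuous_on U D2)"

definition C2_on_sphere :: "(('a::euclidean_space) \<Rightarrow> real) \<Rightarrow> bool" where
  "C2_on_sphere \<rho> \<longleftrightarrow> (\<exists>U g. open U \<and> sphere 0 1 \<subseteq> U \<and> C2_on U g \<and>
      (\<forall>x\<in>sphere 0 1. g x = \<rho> x))"

definition conv_in_prob :: "'a measure \<Rightarrow> (nat \<Rightarrow> 'a \<Rightarrow> real) \<Rightarrow> ('a \<Rightarrow> real) \<Rightarrow> bool" where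
  "conv_in_prob M Y L \<longleftrightarrow>
     (\<forall>e>0. (\<lambda>n. measure M {\<omega>\<in>space M. \<bar>Y n \<omega> - L \<omega>\<bar> > e}) \<longlonglongrightarrow> 0)"

end

theory Submission
  imports Defs "HOL-Real_Asymp.Real_Asymp"
begin

text \<open>
  \<open>Z\<^sub>n\<close> is a sum of independent copies of \<open>exp (- \<beta>\<^sub>n T)\<close> with values in \<open>[0, 1]\<close>, so
  \<open>E Z\<^sub>n = n m(\<beta>\<^sub>n)\<close> and \<open>Var Z\<^sub>n \<le> n m(2 \<beta>\<^sub>n)\<close>, where
  \<open>m(s) = \<integral> \<rho>(y) exp (- s (1 - \<langle>q, y\<rangle>)) d\<sigma>(y)\<close>. Laplace's method gives
  \<open>s\<^sup>k m(s) \<rightarrow> \<rho>(q) (2 pi)\<^sup>k\<close> with \<open>k = (d - 1) / 2 = 1 / \<alpha>\<close>. Hence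
  \<open>Var Z\<^sub>n / (E Z\<^sub>n)\<^sup>2\<close> is of order \<open>(\<beta>\<^sub>n n\<^sup>-\<^sup>\<alpha>)\<^sup>k \<rightarrow> 0\<close>, Chebyshev's inequality gives
  \<open>Z\<^sub>n / E Z\<^sub>n \<rightarrow> 1\<close> in probability, and \<open>E Z\<^sub>n\<close> is asymptotic to the stated normalisation
  because \<open>C(q) \<Gamma>(k + 1) = \<rho>(q) (2 pi)\<^sup>k\<close>.

  Laplace's method for the cap integral is carried out without slicing the sphere. In polar
  coordinates \<open>x = r y\<close> one has \<open>norm (x - q)\<^sup>2 = (r - 1)\<^sup>2 + 2 r (1 - \<langle>q, y\<rangle>)\<close>, so on the shell
  \<open>\<bar>r - 1\<bar> \<le> \<delta>\<close> the Gaussian \<open>exp (- \<beta> norm (x - q)\<^sup>2 / 2)\<close>, whose integral is \<open>(2 pi / \<beta>)\<^sup>d\<^sup>/\<^sup>2\<close>,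
  factors into a one-dimensional Gaussian in \<open>r\<close> and \<open>exp (- \<beta> r (1 - \<langle>q, y\<rangle>))\<close>, with
  \<open>\<beta> r\<close> between \<open>\<beta> (1 - \<delta>)\<close> and \<open>\<beta> (1 + \<delta>)\<close>. Letting \<open>\<delta> \<rightarrow> 0\<close> squeezes the
  normalised cap integral; continuity of \<open>\<rho>\<close> at \<open>q\<close> then passes from \<open>\<rho> = 1\<close> to general \<open>\<rho>\<close>.
\<close>

section \<open>Surface measure and polar coordinates\<close>

lemma sets_sphere_surface_measure [simp, measurable_cong]:
  "sets (sphere_surface_measure :: 'a::euclidean_space measure) = sets borel"
  by (simp add: sphere_surface_measure_def)

lemma space_sphere_surface_measure [simp]:
  "space (sphere_surface_measure :: 'a::euclidean_space measure) = UNIV"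
  using sets_eq_imp_space_eq[OF sets_sphere_surface_measure] by simp

lemma nn_integral_sphere_surface_measure:
  fixes H :: "'a::euclidean_space \<Rightarrow> ennreal"
  assumes [measurable]: "H \<in> borel_measurable borel"
  shows "(\<integral>\<^sup>+ y. H y \<partial>sphere_surface_measure) =
    ennreal (real DIM('a)) * (\<integral>\<^sup>+ x. indicator (cball 0 1) x * H (sgn x) \<partial>lborel)"
  unfolding sphere_surface_measure_def
  by (simp add: nn_integral_scale_measure nn_integral_distr, subst nn_integral_density)
     (auto intro!: borel_measurable_indicator borel_closed)

lemma finite_measure_sphere_surface_measure:
  "finite_measure (sphere_surface_measure :: 'a::euclidean_space measure)"
proof (rule finite_measureI)
  have "emeasure (sphere_surface_measure :: 'a measure) UNIV =
      (\<integral>\<^sup>+ y. 1 \<partial>(sphere_surface_measure :: 'a measure))"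
    by simp
  also have "\<dots> = ennreal (real DIM('a)) * emeasure lborel (cball (0::'a) 1)"
    by (subst nn_integral_sphere_surface_measure) auto
  finally show "emeasure (sphere_surface_measure :: 'a measure) (space sphere_surface_measure) \<noteq> \<infinity>"
    by (simp add: emeasure_cball ennreal_mult_eq_top_iff)
qed

lemma AE_sphere_surface_measure_norm:
  "AE y in (sphere_surface_measure :: 'a::euclidean_space measure). norm y = 1"
proof -
  let ?N = "{y::'a. norm y \<noteq> 1}"
  have [measurable]: "?N \<in> sets borel" by measurable
  have "emeasure (sphere_surface_measure :: 'a measure) ?N =
      ennreal (real DIM('a)) * (\<integral>\<^sup>+ x. indicator (cball 0 1) x * indicator ?N (sgn x) \<partial>lborel)"
    by (subst nn_integral_sphere_surface_measure[symmetric]) auto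
  also have "(\<integral>\<^sup>+ x. indicator (cball 0 1) x * indicator ?N (sgn x) \<partial>lborel) =
      (\<integral>\<^sup>+ x. 0 \<partial>(lborel::'a measure))"
    using AE_lborel_singleton[of "0::'a"]
    by (intro nn_integral_cong_AE) (auto elim!: eventually_mono simp: indicator_def norm_sgn)
  finally show ?thesis
    by (intro AE_I[of _ _ ?N]) auto
qed

lemma AE_sphere_surface_measure_inner_le_1:
  fixes q :: "'a::euclidean_space"
  assumes "norm q = 1"
  shows "AE y in sphere_surface_measure. norm y = 1 \<and> inner q y \<le> 1"
  using AE_sphere_surface_measure_norm
  by eventually_elim (metis assms mult_1 norm_cauchy_schwarz)

lemma nn_integral_sgn_ball_scale:
  fixes H :: "'a::euclidean_space \<Rightarrow> ennreal"
  assumes [measurable]: "H \<in> borel_measurable borel" and b: "b > 0"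
  shows "(\<integral>\<^sup>+ x. H (sgn x) * indicator (ball 0 b) x \<partial>lborel) =
     ennreal (b ^ DIM('a)) * (\<integral>\<^sup>+ x. H (sgn x) * indicator (ball 0 1) x \<partial>lborel)"
proof -
  let ?f = "\<lambda>x::'a. H (sgn x) * indicator (ball 0 b) x"
  have [measurable]: "ball (0::'a) r \<in> sets borel" for r by (simp add: borel_open)
  have "(lborel::'a measure) = density (distr lborel borel (\<lambda>x. 0 + b *\<^sub>R x)) (\<lambda>_. \<bar>b\<bar>^DIM('a))"
    using lborel_affine[of b 0] b by simp
  then have "integral\<^sup>N lborel ?f =
      (\<integral>\<^sup>+ x. ?f x \<partial>density (distr lborel borel (\<lambda>x. 0 + b *\<^sub>R x)) (\<lambda>_. \<bar>b\<bar>^DIM('a)))"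
    by (rule arg_cong)
  also have "\<dots> = (\<integral>\<^sup>+ x. ennreal (b ^ DIM('a)) * (H (sgn x) * indicator (ball 0 1) x) \<partial>lborel)"
    using b by (simp add: nn_integral_density nn_integral_distr sgn_scaleR indicator_def)
  also have "\<dots> = ennreal (b ^ DIM('a)) * (\<integral>\<^sup>+ x. H (sgn x) * indicator (ball 0 1) x \<partial>lborel)"
    by (rule nn_integral_cmult) measurable
  finally show ?thesis .
qed

lemma nn_integral_sgn_ball_eq_cball:
  fixes H :: "'a::euclidean_space \<Rightarrow> ennreal"
  shows "(\<integral>\<^sup>+ x. H (sgn x) * indicator (ball 0 1) x \<partial>lborel) =
     (\<integral>\<^sup>+ x. indicator (cball 0 1) x * H (sgn x) \<partial>lborel)"
proof -
  have "sphere (0::'a) 1 \<in> null_sets lborel"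
    using negligible_sphere[of "0::'a" 1]
    by (auto simp: null_sets_completion_iff negligible_iff_null_sets)
  from AE_not_in[OF this] show ?thesis
    by (intro nn_integral_cong_AE) (auto elim!: eventually_mono simp: indicator_def)
qed

lemma nn_integral_power_reflected:
  assumes b: "b > 0" and d: "d \<ge> 1"
  shows "(\<integral>\<^sup>+ s. ennreal (real d * (-s)^(d-1)) * indicator {-b..0} s \<partial>lborel) = ennreal (b^d)"
proof -
  have "((\<lambda>s. real d * (-s)^(d-1)) has_integral (- ((-0)^d) - (- ((-(-b))^d)))) {-b..0}"
  proof (rule fundamental_theorem_of_calculus)
    fix x :: real assume "x \<in> {-b..0}"
    have "((\<lambda>s::real. - ((-s)^d)) has_real_derivative (real d * (-x)^(d-1))) (at x within {-b..0})"
      by (auto intro!: derivative_eq_intros)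
    then show "((\<lambda>s::real. - ((-s)^d)) has_vector_derivative (real d * (-x)^(d-1))) (at x within {-b..0})"
      by (simp add: has_real_derivative_iff_has_vector_derivative)
  qed (use b in simp)
  then have "((\<lambda>s. real d * (-s)^(d-1)) has_integral b^d) {-b..0}"
    using d by (simp add: zero_power)
  from nn_integral_has_integral_lebesgue'[OF _ this] show ?thesis
    by auto
qed

text \<open>The norm is negated so that balls become the rays \<open>{a<..}\<close>, which determine a measure on
  the real line.\<close>

lemma distr_neg_norm_density_sgn:
  fixes H :: "'a::euclidean_space \<Rightarrow> ennreal"
  defines "c \<equiv> (\<integral>\<^sup>+ x. indicator (cball 0 1) x * H (sgn x) \<partial>lborel)"
  assumes [measurable]: "H \<in> borel_measurable borel" and c: "c < \<infinity>"
  shows "distr (density lborel (\<lambda>x. H (sgn x))) borel (\<lambda>x. - norm x) =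
    density lborel (\<lambda>s. c * ennreal (real DIM('a) * (-s)^(DIM('a)-1)) * indicator {..<0} s)"
    (is "?N = density lborel ?g")
proof (rule measure_eqI_lessThan)
  have [measurable]: "ball (0::'a) r \<in> sets borel" for r by (simp add: borel_open)
  have d1: "DIM('a) \<ge> 1" by (simp add: DIM_positive Suc_leI)
  have key: "emeasure ?N {a<..} = emeasure (density lborel ?g) {a<..} \<and> emeasure ?N {a<..} < \<infinity>" for a
  proof (cases "a < 0")
    case True
    define b where "b = -a"
    have b: "b > 0" using True by (simp add: b_def)
    have "{x::'a. a < - norm x} = ball 0 b" by (auto simp: b_def)
    then have "emeasure ?N {a<..} = (\<integral>\<^sup>+ x. H (sgn x) * indicator (ball 0 b) x \<partial>lborel)"
      by (simp add: emeasure_distr emeasure_density vimage_def)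
    also have "\<dots> = ennreal (b ^ DIM('a)) * c"
      unfolding c_def by (simp add: nn_integral_sgn_ball_scale[OF _ b] nn_integral_sgn_ball_eq_cball)
    finally have N: "emeasure ?N {a<..} = ennreal (b ^ DIM('a)) * c" .
    have "emeasure (density lborel ?g) {a<..} = (\<integral>\<^sup>+ s. ?g s * indicator {a<..} s \<partial>lborel)"
      by (subst emeasure_density) auto
    also have "\<dots> = (\<integral>\<^sup>+ s. c * (ennreal (real DIM('a) * (-s)^(DIM('a)-1)) * indicator {-b..0} s) \<partial>lborel)"
      using AE_lborel_singleton[of a] AE_lborel_singleton[of 0]
      by (intro nn_integral_cong_AE, eventually_elim) (auto simp: indicator_def b_def)
    also have "\<dots> = c * (\<integral>\<^sup>+ s. ennreal (real DIM('a) * (-s)^(DIM('a)-1)) * indicator {-b..0} s \<partial>lborel)"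
      by (rule nn_integral_cmult) measurable
    also have "\<dots> = c * ennreal (b ^ DIM('a))"
      by (simp only: nn_integral_power_reflected[OF b d1])
    finally show ?thesis using N c by (simp add: mult.commute ennreal_mult_less_top)
  next
    case False
    then have "{x::'a. a < - norm x} = {}"
      by (auto simp: not_less) (metis neg_le_0_iff_le norm_ge_zero order_trans)
    moreover have "(\<integral>\<^sup>+ s. ?g s * indicator {a<..} s \<partial>lborel) = 0"
      using False by (intro nn_integral_zero') (auto simp: indicator_def)
    ultimately show ?thesis
      by (simp add: emeasure_distr emeasure_density vimage_def)
  qed
  show "emeasure ?N {a<..} < \<infinity>" "emeasure ?N {a<..} = emeasure (density lborel ?g) {a<..}" for a
    using key by blast+
qed simp_all

lemma nn_integral_polar:
  fixes F :: "real \<Rightarrow> ennreal" and H :: "'a::euclidean_space \<Rightarrow> ennreal"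
  assumes [measurable]: "F \<in> borel_measurable borel" "H \<in> borel_measurable borel"
    and fin: "(\<integral>\<^sup>+ y. H y \<partial>sphere_surface_measure) < \<infinity>"
  shows "(\<integral>\<^sup>+ x. F (norm x) * H (sgn x) \<partial>lborel) =
     (\<integral>\<^sup>+ r. F r * ennreal (r ^ (DIM('a) - 1)) * indicator {0<..} r \<partial>lborel) *
     (\<integral>\<^sup>+ y. H y \<partial>sphere_surface_measure)"
proof -
  define d where "d = DIM('a)"
  define c where "c = (\<integral>\<^sup>+ x. indicator (cball 0 1) x * H (sgn x) \<partial>(lborel::'a measure))"
  have Hs: "(\<integral>\<^sup>+ y. H y \<partial>sphere_surface_measure) = ennreal (real d) * c"
    unfolding c_def d_def by (rule nn_integral_sphere_surface_measure) simp
  have "c < \<infinity>"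
    using fin by (auto simp: Hs d_def ennreal_mult_less_top)
  note radial = distr_neg_norm_density_sgn[of H, folded c_def d_def, OF assms(2) this]
  have "(\<integral>\<^sup>+ x. F (norm x) * H (sgn x) \<partial>lborel) =
      (\<integral>\<^sup>+ x. F (- (- norm x)) \<partial>density lborel (\<lambda>x. H (sgn x)))"
    by (subst nn_integral_density) (auto simp: mult.commute)
  also have "\<dots> = (\<integral>\<^sup>+ s. F (- s) \<partial>distr (density lborel (\<lambda>x::'a. H (sgn x))) borel (\<lambda>x. - norm x))"
    by (subst nn_integral_distr) auto
  also have "\<dots> = (\<integral>\<^sup>+ s. c * ennreal (real d * (-s)^(d-1)) * indicator {..<0} s * F (- s) \<partial>lborel)"
    unfolding radial by (subst nn_integral_density) auto
  also have "\<dots> = (\<integral>\<^sup>+ r. (ennreal (real d) * c) * (F r * ennreal (r ^ (d - 1)) * indicator {0<..} r) \<partial>lborel)"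
    by (subst nn_integral_real_affine[of _ "-1" 0])
       (auto intro!: nn_integral_cong simp: indicator_def ennreal_mult mult_ac)
  also have "\<dots> = (ennreal (real d) * c) * (\<integral>\<^sup>+ r. F r * ennreal (r ^ (d - 1)) * indicator {0<..} r \<partial>lborel)"
    by (subst nn_integral_cmult) auto
  finally show ?thesis unfolding Hs by (simp add: d_def mult.commute)
qed

section \<open>Gaussian integrals\<close>

lemma nn_integral_exp_neg_square:
  assumes b: "\<beta> > 0"
  shows "(\<integral>\<^sup>+ u. ennreal (exp (- (\<beta>/2) * u\<^sup>2)) \<partial>lborel) = ennreal (sqrt (2*pi/\<beta>))"
proof -
  define s where "s = 1 / sqrt \<beta>"
  have s: "s > 0" using b by (simp add: s_def)
  have ss: "s\<^sup>2 = 1/\<beta>" using b by (simp add: s_def power_divide)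
  have eq: "exp (- (\<beta>/2) * u\<^sup>2) = sqrt (2*pi/\<beta>) * normal_density 0 s u" for u
    using b pi_gt_zero unfolding normal_density_def ss
    by (simp add: real_sqrt_divide field_simps)
  have "(\<integral>\<^sup>+ u. ennreal (normal_density 0 s u) \<partial>lborel) = 1"
    using integral_normal_density[OF s]
    by (subst nn_integral_eq_integral) (auto intro: integrable_normal_density[OF s] normal_density_nonneg)
  moreover have "(\<integral>\<^sup>+ u. ennreal (exp (- (\<beta>/2) * u\<^sup>2)) \<partial>lborel) =
        (\<integral>\<^sup>+ u. ennreal (sqrt (2*pi/\<beta>)) * ennreal (normal_density 0 s u) \<partial>lborel)"
    by (intro nn_integral_cong, subst eq, rule ennreal_mult) (use b in \<open>auto simp: normal_density_nonneg\<close>)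
  ultimately show ?thesis
    by (simp add: nn_integral_cmult)
qed

lemma norm_sum_Basis_power2:
  "(norm (\<Sum>b\<in>Basis. f b *\<^sub>R b :: 'a::euclidean_space))\<^sup>2 = (\<Sum>b\<in>Basis. (f b)\<^sup>2)"
proof -
  let ?x = "\<Sum>b\<in>Basis. f b *\<^sub>R b :: 'a"
  have "(norm ?x)\<^sup>2 = inner ?x ?x" by (rule power2_norm_eq_inner)
  also have "\<dots> = (\<Sum>b\<in>Basis. inner ?x b * inner ?x b)" by (rule euclidean_inner)
  also have "\<dots> = (\<Sum>b\<in>Basis. (f b)\<^sup>2)"
    by (intro sum.cong) (auto simp: power2_eq_square)
  finally show ?thesis .
qed

lemma nn_integral_gaussian:
  fixes c :: "'a::euclidean_space"
  assumes b: "\<beta> > 0"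
  shows "(\<integral>\<^sup>+ x. ennreal (exp (- (\<beta>/2) * (norm (x - c))\<^sup>2)) \<partial>lborel) = ennreal (sqrt (2*pi/\<beta>) ^ DIM('a))"
proof -
  interpret P: product_sigma_finite "\<lambda>_::'a. (lborel::real measure)" by standard
  have "(\<integral>\<^sup>+ x. ennreal (exp (- (\<beta>/2) * (norm (x - c))\<^sup>2)) \<partial>lborel) =
      (\<integral>\<^sup>+ x. ennreal (exp (- (\<beta>/2) * (norm (x - c))\<^sup>2)) \<partial>(distr lborel borel ((+) c)))"
    by (simp add: lborel_distr_plus)
  also have "\<dots> = (\<integral>\<^sup>+ x. ennreal (exp (- (\<beta>/2) * (norm (x::'a))\<^sup>2)) \<partial>lborel)"
    by (subst nn_integral_distr) auto
  also have "\<dots> = (\<integral>\<^sup>+ x. ennreal (exp (- (\<beta>/2) * (norm (x::'a))\<^sup>2))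
      \<partial>(distr (\<Pi>\<^sub>M b\<in>Basis. lborel) borel (\<lambda>f. \<Sum>b\<in>Basis. f b *\<^sub>R b)))"
    by (subst lborel_eq) (rule refl)
  also have "\<dots> = (\<integral>\<^sup>+ f. (\<Prod>b\<in>Basis. ennreal (exp (- (\<beta>/2) * (f b)\<^sup>2))) \<partial>(\<Pi>\<^sub>M b\<in>(Basis::'a set). lborel))"
    by (subst nn_integral_distr)
       (auto intro!: nn_integral_cong simp: norm_sum_Basis_power2 sum_distrib_left exp_sum prod_ennreal)
  also have "\<dots> = (\<Prod>b\<in>(Basis::'a set). (\<integral>\<^sup>+ u. ennreal (exp (- (\<beta>/2) * u\<^sup>2)) \<partial>lborel))"
    by (rule P.product_nn_integral_prod) auto
  also have "\<dots> = ennreal (sqrt (2*pi/\<beta>) ^ DIM('a))"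
    by (simp only: nn_integral_exp_neg_square[OF b] prod_constant) (rule ennreal_power, use b in simp)
  finally show ?thesis .
qed

text \<open>The leftover factor \<open>exp (- u\<^sup>2 / 2)\<close> keeps the bound integrable.\<close>

lemma exp_neg_square_le_tail:
  fixes \<beta> \<delta> u :: real
  assumes "\<beta> \<ge> 1" "0 \<le> \<delta>" "\<delta> \<le> \<bar>u\<bar>"
  shows "exp (- (\<beta>/2) * u\<^sup>2) \<le> exp (- (\<beta>-1) * \<delta>\<^sup>2 / 2) * exp (- (1/2) * u\<^sup>2)"
proof -
  have "\<delta>\<^sup>2 \<le> u\<^sup>2"
    using assms by (metis abs_of_nonneg power2_abs power_mono)
  then have "(\<beta>-1) * \<delta>\<^sup>2 \<le> (\<beta>-1) * u\<^sup>2" using assms by (intro mult_left_mono) auto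
  then show ?thesis
    by (simp add: exp_add[symmetric] algebra_simps)
qed

lemma nn_integral_exp_neg_shell_finite:
  "(\<integral>\<^sup>+ x. ennreal (exp (- (1/2) * (norm x - 1)\<^sup>2)) \<partial>(lborel :: 'a::euclidean_space measure)) < \<infinity>"
proof -
  have "exp (- (1/2) * (norm x - 1)\<^sup>2) \<le> exp (1/2) * exp (- ((1/2)/2) * (norm (x - 0))\<^sup>2)" for x :: 'a
  proof -
    have "0 \<le> (norm x - 2)\<^sup>2" by simp
    then show ?thesis
      by (simp add: exp_add[symmetric] power2_eq_square algebra_simps del: diff_0_right)
  qed
  then have "(\<integral>\<^sup>+ x. ennreal (exp (- (1/2) * (norm x - 1)\<^sup>2)) \<partial>(lborel :: 'a measure)) \<le>
      (\<integral>\<^sup>+ x. ennreal (exp (1/2)) * ennreal (exp (- ((1/2)/2) * (norm ((x::'a) - 0))\<^sup>2)) \<partial>lborel)"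
    by (intro nn_integral_mono) (simp add: ennreal_mult'[symmetric] del: diff_0_right)
  also have "\<dots> = ennreal (exp (1/2)) * (\<integral>\<^sup>+ x. ennreal (exp (- ((1/2)/2) * (norm ((x::'a) - 0))\<^sup>2)) \<partial>lborel)"
    by (rule nn_integral_cmult) measurable
  also have "\<dots> = ennreal (exp (1/2)) * ennreal (sqrt (2*pi/(1/2)) ^ DIM('a))"
    by (subst nn_integral_gaussian) auto
  also have "\<dots> < \<infinity>" by (simp add: ennreal_mult_less_top)
  finally show ?thesis .
qed

section \<open>Laplace asymptotics of cap integrals\<close>

definition sphere_laplace :: "'a::euclidean_space \<Rightarrow> real \<Rightarrow> real" where
  "sphere_laplace q s = (\<integral> y. exp (- s * (1 - inner q y)) \<partial>sphere_surface_measure)"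

lemma sphere_laplace_nonneg: "sphere_laplace q s \<ge> 0"
  unfolding sphere_laplace_def by (rule integral_nonneg_AE) auto

lemma integrable_sphere_exp:
  fixes q :: "'a::euclidean_space"
  assumes q: "norm q = 1" and s: "s \<ge> 0"
  shows "integrable sphere_surface_measure (\<lambda>y. exp (- s * (1 - inner q y)))"
proof -
  interpret finite_measure "sphere_surface_measure :: 'a measure"
    by (rule finite_measure_sphere_surface_measure)
  show ?thesis
  proof (rule integrable_const_bound[where B=1])
    show "AE y in sphere_surface_measure. norm (exp (- s * (1 - inner q y))) \<le> 1"
      using AE_sphere_surface_measure_inner_le_1[OF q]
      by eventually_elim (use s in \<open>simp add: mult_nonneg_nonneg\<close>)
  qed measurable
qed

lemma nn_integral_sphere_exp:
  fixes q :: "'a::euclidean_space"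
  assumes "norm q = 1" and "s \<ge> 0"
  shows "(\<integral>\<^sup>+ y. ennreal (exp (- s * (1 - inner q y))) \<partial>sphere_surface_measure) =
      ennreal (sphere_laplace q s)"
  unfolding sphere_laplace_def
  by (rule nn_integral_eq_integral[OF integrable_sphere_exp[OF assms]]) auto

lemma norm_diff_power2_polar:
  fixes x q :: "'a::euclidean_space"
  assumes q: "norm q = 1" and x: "x \<noteq> 0"
  shows "(norm (x - q))\<^sup>2 = (norm x - 1)\<^sup>2 + 2 * norm x * (1 - inner q (sgn x))"
proof -
  have "inner q (sgn x) = inner q x / norm x"
    by (simp add: sgn_div_norm inner_scaleR_right divide_inverse mult.commute)
  then have "2 * norm x * (1 - inner q (sgn x)) = 2 * norm x - 2 * inner q x"
    using x by (simp add: field_simps)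
  moreover have "(norm (x - q))\<^sup>2 = (norm x)\<^sup>2 - 2 * inner q x + 1"
    using q by (simp add: power2_norm_eq_inner inner_diff_left inner_diff_right inner_commute
        flip: power2_norm_eq_inner[of q])
  ultimately show ?thesis
    by (simp add: power2_eq_square algebra_simps)
qed

lemma inner_sgn_le_1:
  fixes x q :: "'a::euclidean_space"
  assumes "norm q = 1"
  shows "inner q (sgn x) \<le> 1"
  using norm_cauchy_schwarz[of q "sgn x"] assms by (cases "x = 0") (auto simp: norm_sgn)

context
  fixes q :: "'a::euclidean_space" and \<beta> \<delta> :: real
  assumes q: "norm q = 1" and \<beta>: "\<beta> \<ge> 1" and \<delta>: "0 < \<delta>" "\<delta> < 1"
begin

definition shell_profile :: "real \<Rightarrow> ennreal" where
  "shell_profile r = ennreal (exp (- (\<beta>/2) * (r - 1)\<^sup>2)) * indicator {1-\<delta>..1+\<delta>} r"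

definition shell_tail :: "'a \<Rightarrow> ennreal" where
  "shell_tail x = ennreal (exp (- (\<beta>/2) * (norm x - 1)\<^sup>2)) * indicator {x. \<delta> < \<bar>norm x - 1\<bar>} x"

lemma shell_profile_measurable [measurable]: "shell_profile \<in> borel_measurable borel"
  unfolding shell_profile_def by measurable

lemma shell_tail_measurable [measurable]: "shell_tail \<in> borel_measurable borel"
  unfolding shell_tail_def by measurable

lemma shell_profile_times_cap_le_gaussian:
  "shell_profile (norm x) * ennreal (exp (- (\<beta> * (1 + \<delta>)) * (1 - inner q (sgn x))))
     \<le> ennreal (exp (- (\<beta>/2) * (norm (x - q))\<^sup>2))"
proof (cases "norm x \<in> {1-\<delta>..1+\<delta>}")
  case True
  then have x: "x \<noteq> 0" using \<delta> by auto
  define r where "r = norm x"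
  define t where "t = 1 - inner q (sgn x)"
  have "t \<ge> 0" using inner_sgn_le_1[OF q, of x] by (simp add: t_def)
  moreover have "r \<le> 1 + \<delta>" using True by (simp add: r_def)
  ultimately have "\<beta> * r * t \<le> \<beta> * (1 + \<delta>) * t"
    using \<beta> by (intro mult_right_mono mult_left_mono) auto
  then have "exp (- (\<beta>/2) * (r - 1)\<^sup>2) * exp (- (\<beta> * (1 + \<delta>)) * t) \<le> exp (- (\<beta>/2) * (norm (x - q))\<^sup>2)"
    unfolding norm_diff_power2_polar[OF q x] r_def[symmetric] t_def[symmetric]
    by (simp add: exp_add[symmetric] algebra_simps)
  then show ?thesis using True
    by (simp add: shell_profile_def r_def t_def ennreal_mult'[symmetric])
qed (simp add: shell_profile_def)

lemma gaussian_le_shell_profile_times_cap: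
  "ennreal (exp (- (\<beta>/2) * (norm (x - q))\<^sup>2))
     \<le> shell_profile (norm x) * ennreal (exp (- (\<beta> * (1 - \<delta>)) * (1 - inner q (sgn x)))) + shell_tail x"
proof (cases "\<bar>norm x - 1\<bar> \<le> \<delta>")
  case True
  then have x: "x \<noteq> 0" using \<delta> by auto
  define r where "r = norm x"
  define t where "t = 1 - inner q (sgn x)"
  have "t \<ge> 0" using inner_sgn_le_1[OF q, of x] by (simp add: t_def)
  moreover have "1 - \<delta> \<le> r" using True by (simp add: r_def abs_le_iff)
  ultimately have "\<beta> * (1 - \<delta>) * t \<le> \<beta> * r * t"
    using \<beta> by (intro mult_right_mono mult_left_mono) auto
  then have "exp (- (\<beta>/2) * (norm (x - q))\<^sup>2) \<le> exp (- (\<beta>/2) * (r - 1)\<^sup>2) * exp (- (\<beta> * (1 - \<delta>)) * t)"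
    unfolding norm_diff_power2_polar[OF q x] r_def[symmetric] t_def[symmetric]
    by (simp add: exp_add[symmetric] algebra_simps)
  moreover have "norm x \<in> {1-\<delta>..1+\<delta>}" using True by (auto simp: abs_le_iff)
  ultimately show ?thesis
    by (intro add_increasing2) (simp_all add: shell_profile_def r_def t_def ennreal_mult'[symmetric])
next
  case False
  have "\<bar>norm x - norm q\<bar> \<le> norm (x - q)" by (rule norm_triangle_ineq3)
  then have "(norm x - 1)\<^sup>2 \<le> (norm (x - q))\<^sup>2" using q
    by (metis abs_ge_zero power2_abs power_mono)
  then have "ennreal (exp (- (\<beta>/2) * (norm (x - q))\<^sup>2)) \<le> shell_tail x"
    using False \<beta> by (simp add: shell_tail_def)
  then show ?thesis by (simp add: add_increasing)
qed

lemma nn_integral_shell_polar: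
  assumes "s \<ge> 0"
  shows "(\<integral>\<^sup>+ x. shell_profile (norm x) * ennreal (exp (- s * (1 - inner q (sgn x)))) \<partial>lborel) =
     (\<integral>\<^sup>+ r. shell_profile r * ennreal (r ^ (DIM('a) - 1)) * indicator {0<..} r \<partial>lborel) *
     ennreal (sphere_laplace q s)"
  using nn_integral_polar[of shell_profile "\<lambda>y. ennreal (exp (- s * (1 - inner q y)))"]
    nn_integral_sphere_exp[OF q assms]
  by simp

lemma nn_integral_shell_moment_ge:
  "ennreal ((1-\<delta>)^(DIM('a)-1)) * integral\<^sup>N lborel shell_profile \<le>
    (\<integral>\<^sup>+ r. shell_profile r * ennreal (r^(DIM('a)-1)) * indicator {0<..} r \<partial>lborel)"
proof -
  have "ennreal ((1-\<delta>)^(DIM('a)-1)) * shell_profile r \<le> shell_profile r * ennreal (r^(DIM('a)-1)) * indicator {0<..} r"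
    for r
  proof (cases "r \<in> {1-\<delta>..1+\<delta>}")
    case True
    then have "r > 0" "(1-\<delta>)^(DIM('a)-1) \<le> r^(DIM('a)-1)" using \<delta> by (auto intro!: power_mono)
    then show ?thesis using True
      by (auto simp: shell_profile_def mult.commute intro!: mult_right_mono ennreal_leI)
  qed (simp add: shell_profile_def)
  then have "(\<integral>\<^sup>+ r. ennreal ((1-\<delta>)^(DIM('a)-1)) * shell_profile r \<partial>lborel) \<le>
      (\<integral>\<^sup>+ r. shell_profile r * ennreal (r^(DIM('a)-1)) * indicator {0<..} r \<partial>lborel)"
    by (rule nn_integral_mono)
  then show ?thesis
    by (simp add: nn_integral_cmult)
qed

lemma nn_integral_shell_moment_le:
  "(\<integral>\<^sup>+ r. shell_profile r * ennreal (r^(DIM('a)-1)) * indicator {0<..} r \<partial>lborel) \<le>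
    ennreal ((1+\<delta>)^(DIM('a)-1)) * integral\<^sup>N lborel shell_profile"
proof -
  have "shell_profile r * ennreal (r^(DIM('a)-1)) * indicator {0<..} r \<le> ennreal ((1+\<delta>)^(DIM('a)-1)) * shell_profile r"
    for r
  proof (cases "r \<in> {1-\<delta>..1+\<delta>}")
    case True
    then have "r > 0" "r^(DIM('a)-1) \<le> (1+\<delta>)^(DIM('a)-1)" using \<delta> by (auto intro!: power_mono)
    then show ?thesis using True
      by (auto simp: shell_profile_def mult.commute intro!: mult_right_mono ennreal_leI)
  qed (simp add: shell_profile_def)
  then have "(\<integral>\<^sup>+ r. shell_profile r * ennreal (r^(DIM('a)-1)) * indicator {0<..} r \<partial>lborel) \<le>
      (\<integral>\<^sup>+ r. ennreal ((1+\<delta>)^(DIM('a)-1)) * shell_profile r \<partial>lborel)"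
    by (rule nn_integral_mono)
  then show ?thesis
    by (simp add: nn_integral_cmult)
qed

lemma nn_integral_shell_profile:
  "integral\<^sup>N lborel shell_profile = (\<integral>\<^sup>+ u. ennreal (exp (- (\<beta>/2) * u\<^sup>2)) * indicator {-\<delta>..\<delta>} u \<partial>lborel)"
proof -
  have "integral\<^sup>N lborel shell_profile = ennreal \<bar>1\<bar> * (\<integral>\<^sup>+ u. shell_profile (1 + 1 * u) \<partial>lborel)"
    by (rule nn_integral_real_affine) auto
  then show ?thesis
    by (simp add: shell_profile_def indicator_def)
qed

lemma nn_integral_shell_profile_le: "integral\<^sup>N lborel shell_profile \<le> ennreal (sqrt (2*pi/\<beta>))"
proof -
  have "integral\<^sup>N lborel shell_profile \<le> (\<integral>\<^sup>+ u. ennreal (exp (- (\<beta>/2) * u\<^sup>2)) \<partial>lborel)"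
    unfolding nn_integral_shell_profile by (intro nn_integral_mono) (auto simp: indicator_def)
  also have "\<dots> = ennreal (sqrt (2*pi/\<beta>))" using \<beta> by (intro nn_integral_exp_neg_square) auto
  finally show ?thesis .
qed

lemma nn_integral_shell_profile_ge:
  "ennreal (sqrt (2*pi/\<beta>)) \<le> integral\<^sup>N lborel shell_profile + ennreal (exp (- (\<beta>-1) * \<delta>\<^sup>2 / 2) * sqrt (2*pi))"
proof -
  have tail: "exp (- (\<beta>/2) * u\<^sup>2) \<le> exp (- (\<beta>-1) * \<delta>\<^sup>2 / 2) * exp (- (1/2) * u\<^sup>2)" if "u \<notin> {-\<delta>..\<delta>}" for u
    using that \<beta> \<delta> by (intro exp_neg_square_le_tail) auto
  have "ennreal (sqrt (2*pi/\<beta>)) = (\<integral>\<^sup>+ u. ennreal (exp (- (\<beta>/2) * u\<^sup>2)) \<partial>lborel)"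
    using \<beta> by (intro nn_integral_exp_neg_square[symmetric]) auto
  also have "\<dots> \<le> (\<integral>\<^sup>+ u. ennreal (exp (- (\<beta>/2) * u\<^sup>2)) * indicator {-\<delta>..\<delta>} u +
        ennreal (exp (- (\<beta>-1) * \<delta>\<^sup>2 / 2)) * ennreal (exp (- (1/2) * u\<^sup>2)) \<partial>lborel)"
    using tail by (intro nn_integral_mono) (auto simp: indicator_def ennreal_mult'[symmetric])
  also have "\<dots> = integral\<^sup>N lborel shell_profile +
      ennreal (exp (- (\<beta>-1) * \<delta>\<^sup>2 / 2)) * (\<integral>\<^sup>+ u. ennreal (exp (- (1/2) * u\<^sup>2)) \<partial>lborel)"
    unfolding nn_integral_shell_profile by (subst nn_integral_add) (auto simp: nn_integral_cmult)
  also have "(\<integral>\<^sup>+ u. ennreal (exp (- (1/2) * u\<^sup>2)) \<partial>lborel) = ennreal (sqrt (2*pi))"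
    using nn_integral_exp_neg_square[of 1] by simp
  finally show ?thesis by (simp add: ennreal_mult'[symmetric])
qed

lemma nn_integral_shell_tail_le:
  "integral\<^sup>N lborel shell_tail \<le> ennreal (exp (- (\<beta>-1) * \<delta>\<^sup>2 / 2)) *
     (\<integral>\<^sup>+ x. ennreal (exp (- (1/2) * (norm x - 1)\<^sup>2)) \<partial>(lborel :: 'a measure))"
proof -
  have "shell_tail x \<le> ennreal (exp (- (\<beta>-1) * \<delta>\<^sup>2 / 2)) * ennreal (exp (- (1/2) * (norm x - 1)\<^sup>2))" for x
    using exp_neg_square_le_tail[OF \<beta> less_imp_le[OF \<delta>(1)], of "norm x - 1"]
    by (auto simp: shell_tail_def indicator_def ennreal_mult'[symmetric])
  then have "integral\<^sup>N lborel shell_tail \<le>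
      (\<integral>\<^sup>+ x. ennreal (exp (- (\<beta>-1) * \<delta>\<^sup>2 / 2)) * ennreal (exp (- (1/2) * (norm (x::'a) - 1)\<^sup>2)) \<partial>lborel)"
    by (rule nn_integral_mono)
  then show ?thesis
    by (simp add: nn_integral_cmult)
qed

lemma ennreal_enn2real_nn_integral_shell_profile:
  "integral\<^sup>N lborel shell_profile = ennreal (enn2real (integral\<^sup>N lborel shell_profile))"
  using nn_integral_shell_profile_le by (simp add: le_less_trans)

lemma sphere_laplace_le_gaussian:
  "(1-\<delta>)^(DIM('a)-1) * enn2real (integral\<^sup>N lborel shell_profile) * sphere_laplace q (\<beta> * (1 + \<delta>))
     \<le> sqrt (2*pi/\<beta>) ^ DIM('a)"
proof -
  have s: "\<beta> * (1 + \<delta>) \<ge> 0" using \<beta> \<delta> by simp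
  have "ennreal ((1-\<delta>)^(DIM('a)-1) * enn2real (integral\<^sup>N lborel shell_profile) * sphere_laplace q (\<beta> * (1 + \<delta>)))
      = ennreal ((1-\<delta>)^(DIM('a)-1)) * integral\<^sup>N lborel shell_profile * ennreal (sphere_laplace q (\<beta> * (1 + \<delta>)))"
    using \<delta> sphere_laplace_nonneg[of q]
    by (subst (2) ennreal_enn2real_nn_integral_shell_profile) (simp add: ennreal_mult)
  also have "\<dots> \<le> (\<integral>\<^sup>+ r. shell_profile r * ennreal (r ^ (DIM('a) - 1)) * indicator {0<..} r \<partial>lborel) *
          ennreal (sphere_laplace q (\<beta> * (1 + \<delta>)))"
    using nn_integral_shell_moment_ge by (intro mult_right_mono) auto
  also have "\<dots> = (\<integral>\<^sup>+ x. shell_profile (norm x) * ennreal (exp (- (\<beta> * (1 + \<delta>)) * (1 - inner q (sgn x)))) \<partial>lborel)"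
    by (rule nn_integral_shell_polar[OF s, symmetric])
  also have "\<dots> \<le> (\<integral>\<^sup>+ x. ennreal (exp (- (\<beta>/2) * (norm (x - q))\<^sup>2)) \<partial>lborel)"
    by (intro nn_integral_mono shell_profile_times_cap_le_gaussian)
  also have "\<dots> = ennreal (sqrt (2*pi/\<beta>) ^ DIM('a))"
    using \<beta> by (intro nn_integral_gaussian) auto
  finally show ?thesis
    using \<beta> by (subst (asm) ennreal_le_iff) auto
qed

lemma gaussian_window_le:
  "sqrt (2*pi/\<beta>) \<le> enn2real (integral\<^sup>N lborel shell_profile) + exp (- (\<beta>-1) * \<delta>\<^sup>2 / 2) * sqrt (2*pi)"
proof -
  have "ennreal (sqrt (2*pi/\<beta>)) \<le> integral\<^sup>N lborel shell_profile + ennreal (exp (- (\<beta>-1) * \<delta>\<^sup>2 / 2) * sqrt (2*pi))"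
    by (rule nn_integral_shell_profile_ge)
  also have "\<dots> = ennreal (enn2real (integral\<^sup>N lborel shell_profile) + exp (- (\<beta>-1) * \<delta>\<^sup>2 / 2) * sqrt (2*pi))"
    by (subst ennreal_enn2real_nn_integral_shell_profile) (simp add: ennreal_plus)
  finally show ?thesis
    by (subst (asm) ennreal_le_iff) auto
qed

lemma gaussian_le_sphere_laplace:
  defines "C \<equiv> enn2real (\<integral>\<^sup>+ x. ennreal (exp (- (1/2) * (norm x - 1)\<^sup>2)) \<partial>(lborel :: 'a measure))"
  shows "sqrt (2*pi/\<beta>) ^ DIM('a) \<le> (1+\<delta>)^(DIM('a)-1) * sqrt (2*pi/\<beta>) * sphere_laplace q (\<beta> * (1 - \<delta>)) +
           exp (- (\<beta>-1) * \<delta>\<^sup>2 / 2) * C"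
proof -
  have s: "\<beta> * (1 - \<delta>) \<ge> 0" using \<beta> \<delta> by simp
  have A: "sphere_laplace q (\<beta> * (1 - \<delta>)) \<ge> 0" by (rule sphere_laplace_nonneg)
  have "(\<integral>\<^sup>+ x. ennreal (exp (- (1/2) * (norm x - 1)\<^sup>2)) \<partial>(lborel :: 'a measure)) < \<infinity>"
    by (rule nn_integral_exp_neg_shell_finite)
  then have C: "(\<integral>\<^sup>+ x. ennreal (exp (- (1/2) * (norm x - 1)\<^sup>2)) \<partial>(lborel :: 'a measure)) = ennreal C" "C \<ge> 0"
    unfolding C_def by simp_all
  have "ennreal (sqrt (2*pi/\<beta>) ^ DIM('a)) = (\<integral>\<^sup>+ x. ennreal (exp (- (\<beta>/2) * (norm (x - q))\<^sup>2)) \<partial>lborel)"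
    using \<beta> by (intro nn_integral_gaussian[symmetric]) auto
  also have "\<dots> \<le> (\<integral>\<^sup>+ x. shell_profile (norm x) * ennreal (exp (- (\<beta> * (1 - \<delta>)) * (1 - inner q (sgn x)))) +
      shell_tail x \<partial>lborel)"
    by (intro nn_integral_mono gaussian_le_shell_profile_times_cap)
  also have "\<dots> = (\<integral>\<^sup>+ r. shell_profile r * ennreal (r ^ (DIM('a) - 1)) * indicator {0<..} r \<partial>lborel) *
      ennreal (sphere_laplace q (\<beta> * (1 - \<delta>))) + integral\<^sup>N lborel shell_tail"
    using nn_integral_shell_polar[OF s] by (subst nn_integral_add) auto
  also have "\<dots> \<le> ennreal ((1+\<delta>)^(DIM('a)-1)) * ennreal (sqrt (2*pi/\<beta>)) * ennreal (sphere_laplace q (\<beta> * (1 - \<delta>))) +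
       ennreal (exp (- (\<beta>-1) * \<delta>\<^sup>2 / 2)) * ennreal C"
    using order.trans[OF nn_integral_shell_moment_le mult_left_mono[OF nn_integral_shell_profile_le]]
      nn_integral_shell_tail_le
    unfolding C(1) by (intro add_mono mult_right_mono) auto
  also have "\<dots> = ennreal ((1+\<delta>)^(DIM('a)-1) * sqrt (2*pi/\<beta>) * sphere_laplace q (\<beta> * (1 - \<delta>)) +
       exp (- (\<beta>-1) * \<delta>\<^sup>2 / 2) * C)"
    using A C(2) \<delta> \<beta> by (subst ennreal_plus) (auto simp: ennreal_mult)
  finally show ?thesis
    using A C(2) \<delta> \<beta> by (subst (asm) ennreal_le_iff) auto
qed

end

lemma sqrt_mult_sqrt_divide_power:
  assumes b: "\<beta> > 0" and w: "w > 0"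
  shows "sqrt \<beta> * sqrt (w/\<beta>) ^ d = sqrt w * w powr ((real d - 1)/2) / \<beta> powr ((real d - 1)/2)"
proof -
  have sqrt_power: "sqrt x ^ n = x powr (real n / 2)" if "x > 0" for x :: real and n
    using that by (simp add: powr_half_sqrt_powr powr_realpow real_sqrt_power)
  have "sqrt \<beta> * sqrt (w/\<beta>) ^ d = \<beta> powr (1/2) * (w powr (real d / 2) / \<beta> powr (real d / 2))"
    using b w by (simp add: sqrt_power powr_half_sqrt powr_divide)
  also have "w powr (real d / 2) = w powr (1/2) * w powr ((real d - 1)/2)"
    by (simp add: powr_add[symmetric] diff_divide_distrib)
  also have "\<beta> powr (real d / 2) = \<beta> powr (1/2) * \<beta> powr ((real d - 1)/2)"
    by (simp add: powr_add[symmetric] diff_divide_distrib)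
  finally show ?thesis using b w by (simp add: powr_half_sqrt field_simps)
qed

text \<open>The Gaussian comparisons above, solved for the cap integral \<open>A\<close>; \<open>P\<close> is the shell window
  integral and \<open>E\<close>, \<open>T\<close> are the Gaussian tails outside the shell.\<close>

lemma laplace_upper_bound_from_sandwich:
  fixes \<beta> \<delta> P A w E :: real and d :: nat
  defines "k \<equiv> (real d - 1)/2"
  assumes b: "\<beta> > 0" and dl: "0 < \<delta>" "\<delta> < 1" and A: "A \<ge> 0" and w: "w > 0" and d1: "d \<ge> 1"
    and h1: "(1-\<delta>)^(d-1) * P * A \<le> sqrt (w/\<beta>) ^ d"
    and h2: "sqrt (w/\<beta>) \<le> P + E * sqrt w"
    and h3: "sqrt \<beta> * E \<le> \<delta>"
  shows "(\<beta> * (1 + \<delta>)) powr k * A \<le> (1 + \<delta>) powr k * w powr k / (1-\<delta>)^d"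
proof -
  have sb: "sqrt \<beta> * sqrt (w/\<beta>) = sqrt w" using b w by (simp add: real_sqrt_mult[symmetric])
  have "sqrt w \<le> sqrt \<beta> * P + (sqrt \<beta> * E) * sqrt w"
    using mult_left_mono[OF h2, of "sqrt \<beta>"] sb b by (simp add: algebra_simps)
  also have "\<dots> \<le> sqrt \<beta> * P + \<delta> * sqrt w"
    using h3 w by (intro add_left_mono mult_right_mono) auto
  finally have hP: "(1-\<delta>) * sqrt w \<le> sqrt \<beta> * P" by (simp add: algebra_simps)
  have "(1-\<delta>)^(d-1) * ((1-\<delta>) * sqrt w) * A \<le> (1-\<delta>)^(d-1) * (sqrt \<beta> * P) * A"
    using hP dl A by (intro mult_right_mono mult_left_mono) auto
  also have "\<dots> \<le> sqrt \<beta> * sqrt (w/\<beta>) ^ d"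
    using mult_left_mono[OF h1, of "sqrt \<beta>"] b by (simp add: algebra_simps)
  also have "\<dots> = sqrt w * (w powr k / \<beta> powr k)"
    unfolding k_def by (simp add: sqrt_mult_sqrt_divide_power[OF b w])
  finally have "sqrt w * ((1-\<delta>)^(d-1) * (1-\<delta>) * A) \<le> sqrt w * (w powr k / \<beta> powr k)"
    by (simp add: algebra_simps)
  then have "(1-\<delta>)^(d-1) * (1-\<delta>) * A \<le> w powr k / \<beta> powr k"
    using w by (subst (asm) mult_le_cancel_left_pos) auto
  moreover have "(1-\<delta>)^(d-1) * (1-\<delta>) = (1-\<delta>)^d" using d1 by (cases d) auto
  ultimately have "(1-\<delta>)^d * A \<le> w powr k / \<beta> powr k" by simp
  then have "\<beta> powr k * ((1-\<delta>)^d * A) \<le> w powr k"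
    using b by (simp add: pos_le_divide_eq mult.commute)
  then have "\<beta> powr k * A \<le> w powr k / (1-\<delta>)^d"
    using dl by (simp add: pos_le_divide_eq algebra_simps)
  then have "(1 + \<delta>) powr k * (\<beta> powr k * A) \<le> (1 + \<delta>) powr k * (w powr k / (1-\<delta>)^d)"
    by (intro mult_left_mono) auto
  moreover have "(\<beta> * (1 + \<delta>)) powr k = \<beta> powr k * (1 + \<delta>) powr k"
    using b dl by (simp add: powr_mult)
  ultimately show ?thesis by (simp add: algebra_simps)
qed

lemma laplace_lower_bound_from_sandwich:
  fixes \<beta> \<delta> A w T :: real and d :: nat
  defines "k \<equiv> (real d - 1)/2"
  assumes b: "\<beta> > 0" and dl: "0 < \<delta>" "\<delta> < 1" and w: "w > 0"
    and h1: "sqrt (w/\<beta>) ^ d \<le> (1+\<delta>)^(d-1) * sqrt (w/\<beta>) * A + T"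
    and h2: "\<beta> powr k * sqrt \<beta> * T \<le> \<delta>"
  shows "(1-\<delta>) powr k * (w powr k * sqrt w - \<delta>) / ((1+\<delta>)^(d-1) * sqrt w) \<le> (\<beta> * (1 - \<delta>)) powr k * A"
proof -
  define e where "e = \<beta> powr k"
  have e: "e > 0" using b by (simp add: e_def)
  have sb: "sqrt \<beta> * sqrt (w/\<beta>) = sqrt w" using b w by (simp add: real_sqrt_mult[symmetric])
  have "sqrt w * w powr k = e * (sqrt \<beta> * sqrt (w/\<beta>) ^ d)"
    using e unfolding k_def e_def by (simp add: sqrt_mult_sqrt_divide_power[OF b w])
  also have "\<dots> \<le> e * (sqrt \<beta> * ((1+\<delta>)^(d-1) * sqrt (w/\<beta>) * A + T))"
    using h1 e b by (intro mult_left_mono) auto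
  also have "\<dots> = (1+\<delta>)^(d-1) * (sqrt \<beta> * sqrt (w/\<beta>)) * (e * A) + e * sqrt \<beta> * T"
    by (simp add: algebra_simps)
  also have "\<dots> \<le> (1+\<delta>)^(d-1) * sqrt w * (e * A) + \<delta>"
    using h2 unfolding sb by (simp add: e_def)
  finally have "w powr k * sqrt w - \<delta> \<le> ((1+\<delta>)^(d-1) * sqrt w) * (e * A)"
    by (simp add: algebra_simps)
  then have "(w powr k * sqrt w - \<delta>) / ((1+\<delta>)^(d-1) * sqrt w) \<le> e * A"
    using w dl by (subst pos_divide_le_eq) (auto simp: mult.commute)
  then have "(1-\<delta>) powr k * ((w powr k * sqrt w - \<delta>) / ((1+\<delta>)^(d-1) * sqrt w)) \<le> (1-\<delta>) powr k * (e * A)"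
    by (intro mult_left_mono) auto
  moreover have "(\<beta> * (1 - \<delta>)) powr k = e * (1 - \<delta>) powr k"
    using b dl by (simp add: powr_mult e_def)
  ultimately show ?thesis by (simp add: algebra_simps)
qed

lemma sphere_laplace_eventually_le:
  fixes q :: "'a::euclidean_space"
  defines "k \<equiv> (real DIM('a) - 1) / 2"
  assumes q: "norm q = 1" and \<delta>: "0 < \<delta>" "\<delta> < 1"
  shows "eventually (\<lambda>s. s powr k * sphere_laplace q s \<le> (1+\<delta>) powr k * (2*pi) powr k / (1-\<delta>)^DIM('a)) at_top"
proof -
  have "((\<lambda>\<beta>. sqrt \<beta> * exp (- (\<beta>-1) * \<delta>\<^sup>2 / 2)) \<longlongrightarrow> 0) at_top"
    using \<delta> by real_asymp
  from order_tendstoD(2)[OF this \<delta>(1)] eventually_ge_at_top[of 1]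
  have "eventually (\<lambda>\<beta>. 1 \<le> \<beta> \<and> sqrt \<beta> * exp (- (\<beta>-1) * \<delta>\<^sup>2 / 2) < \<delta>) at_top"
    by eventually_elim auto
  moreover have "filterlim (\<lambda>s. inverse (1 + \<delta>) * s) at_top at_top"
    by (rule filterlim_tendsto_pos_mult_at_top[OF tendsto_const _ filterlim_ident]) (use \<delta> in simp)
  ultimately have "eventually (\<lambda>s. let \<beta> = inverse (1 + \<delta>) * s in
      1 \<le> \<beta> \<and> sqrt \<beta> * exp (- (\<beta>-1) * \<delta>\<^sup>2 / 2) < \<delta>) at_top"
    unfolding Let_def by (rule eventually_compose_filterlim)
  then show ?thesis
  proof eventually_elim
    case (elim s)
    define \<beta> where "\<beta> = inverse (1 + \<delta>) * s"
    have \<beta>: "1 \<le> \<beta>" "sqrt \<beta> * exp (- (\<beta>-1) * \<delta>\<^sup>2 / 2) \<le> \<delta>"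
      using elim unfolding \<beta>_def Let_def by auto
    have s: "s = \<beta> * (1 + \<delta>)" using \<delta> by (simp add: \<beta>_def)
    have "DIM('a) \<ge> 1" by (simp add: DIM_positive Suc_leI)
    with \<beta> \<delta> show ?case
      unfolding s k_def
      by (intro laplace_upper_bound_from_sandwich[OF _ _ _ sphere_laplace_nonneg _ _
            sphere_laplace_le_gaussian[OF q \<beta>(1) \<delta>] gaussian_window_le[OF q \<beta>(1) \<delta>]]) (auto simp: mult.commute)
  qed
qed

lemma sphere_laplace_eventually_ge:
  fixes q :: "'a::euclidean_space"
  defines "k \<equiv> (real DIM('a) - 1) / 2"
  assumes q: "norm q = 1" and \<delta>: "0 < \<delta>" "\<delta> < 1"
  shows "eventually (\<lambda>s. (1-\<delta>) powr k * ((2*pi) powr k * sqrt (2*pi) - \<delta>) / ((1+\<delta>)^(DIM('a)-1) * sqrt (2*pi))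
    \<le> s powr k * sphere_laplace q s) at_top"
proof -
  define C where "C = enn2real (\<integral>\<^sup>+ x. ennreal (exp (- (1/2) * (norm x - 1)\<^sup>2)) \<partial>(lborel :: 'a measure))"
  have "((\<lambda>\<beta>. \<beta> powr k * sqrt \<beta> * exp (- (\<beta>-1) * \<delta>\<^sup>2 / 2)) \<longlongrightarrow> 0) at_top"
    using \<delta> by real_asymp
  from tendsto_mult_right_zero[OF this, of C]
  have "((\<lambda>\<beta>. \<beta> powr k * sqrt \<beta> * (exp (- (\<beta>-1) * \<delta>\<^sup>2 / 2) * C)) \<longlongrightarrow> 0) at_top"
    by (simp add: mult_ac)
  from order_tendstoD(2)[OF this \<delta>(1)] eventually_ge_at_top[of 1]
  have "eventually (\<lambda>\<beta>. 1 \<le> \<beta> \<and> \<beta> powr k * sqrt \<beta> * (exp (- (\<beta>-1) * \<delta>\<^sup>2 / 2) * C) < \<delta>) at_top"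
    by eventually_elim auto
  moreover have "filterlim (\<lambda>s. inverse (1 - \<delta>) * s) at_top at_top"
    by (rule filterlim_tendsto_pos_mult_at_top[OF tendsto_const _ filterlim_ident]) (use \<delta> in simp)
  ultimately have "eventually (\<lambda>s. let \<beta> = inverse (1 - \<delta>) * s in
      1 \<le> \<beta> \<and> \<beta> powr k * sqrt \<beta> * (exp (- (\<beta>-1) * \<delta>\<^sup>2 / 2) * C) < \<delta>) at_top"
    unfolding Let_def by (rule eventually_compose_filterlim)
  then show ?thesis
  proof eventually_elim
    case (elim s)
    define \<beta> where "\<beta> = inverse (1 - \<delta>) * s"
    have \<beta>: "1 \<le> \<beta>" "\<beta> powr k * sqrt \<beta> * (exp (- (\<beta>-1) * \<delta>\<^sup>2 / 2) * C) \<le> \<delta>"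
      using elim unfolding \<beta>_def Let_def by auto
    have s: "s = \<beta> * (1 - \<delta>)" using \<delta> by (simp add: \<beta>_def)
    from \<beta> \<delta> show ?case
      unfolding s k_def
      by (intro laplace_lower_bound_from_sandwich[OF _ _ _ _
            gaussian_le_sphere_laplace[OF q \<beta>(1) \<delta>, folded C_def]]) (auto simp: k_def)
  qed
qed

lemma tendsto_at_top_squeeze_family:
  fixes a :: "real \<Rightarrow> real" and u l :: "real \<Rightarrow> real"
  assumes up: "\<And>\<delta>. 0 < \<delta> \<Longrightarrow> \<delta> < 1 \<Longrightarrow> eventually (\<lambda>s. a s \<le> u \<delta>) at_top"
    and lo: "\<And>\<delta>. 0 < \<delta> \<Longrightarrow> \<delta> < 1 \<Longrightarrow> eventually (\<lambda>s. l \<delta> \<le> a s) at_top"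
    and ul: "(u \<longlongrightarrow> L) (at_right 0)" "(l \<longlongrightarrow> L) (at_right 0)"
  shows "(a \<longlongrightarrow> L) at_top"
proof (rule tendstoI)
  fix e :: real assume e: "e > 0"
  have "eventually (\<lambda>\<delta>. 0 < \<delta> \<and> \<delta> < 1) (at_right (0::real))"
    unfolding eventually_at_right_field by (intro exI[of _ 1]) auto
  with tendstoD[OF ul(1) e] tendstoD[OF ul(2) e]
  have "eventually (\<lambda>\<delta>. dist (u \<delta>) L < e \<and> dist (l \<delta>) L < e \<and> 0 < \<delta> \<and> \<delta> < 1) (at_right (0::real))"
    by eventually_elim auto
  then obtain \<delta> where \<delta>: "dist (u \<delta>) L < e" "dist (l \<delta>) L < e" "0 < \<delta>" "\<delta> < 1"
    using eventually_happens[of _ "at_right (0::real)"] trivial_limit_at_right_real by blast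
  from up[OF \<delta>(3,4)] lo[OF \<delta>(3,4)] show "eventually (\<lambda>s. dist (a s) L < e) at_top"
    by eventually_elim (use \<delta>(1,2) in \<open>auto simp: dist_real_def abs_less_iff\<close>)
qed

lemma sphere_laplace_asymptotics:
  fixes q :: "'a::euclidean_space"
  defines "k \<equiv> (real DIM('a) - 1) / 2"
  assumes q: "norm q = 1"
  shows "((\<lambda>s. s powr k * sphere_laplace q s) \<longlongrightarrow> (2*pi) powr k) at_top"
proof (rule tendsto_at_top_squeeze_family)
  show "eventually (\<lambda>s. s powr k * sphere_laplace q s \<le> (1+\<delta>) powr k * (2*pi) powr k / (1-\<delta>)^DIM('a)) at_top"
    if "0 < \<delta>" "\<delta> < 1" for \<delta>
    unfolding k_def by (rule sphere_laplace_eventually_le[OF q that])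
  show "eventually (\<lambda>s. (1-\<delta>) powr k * ((2*pi) powr k * sqrt (2*pi) - \<delta>) / ((1+\<delta>)^(DIM('a)-1) * sqrt (2*pi))
      \<le> s powr k * sphere_laplace q s) at_top" if "0 < \<delta>" "\<delta> < 1" for \<delta>
    unfolding k_def by (rule sphere_laplace_eventually_ge[OF q that])
  have "((\<lambda>\<delta>. (1+\<delta>) powr k * (2*pi) powr k / (1-\<delta>)^DIM('a)) \<longlongrightarrow>
      (1+0) powr k * (2*pi) powr k / (1-0)^DIM('a)) (at_right 0)"
    by (intro tendsto_intros) auto
  then show "((\<lambda>\<delta>. (1+\<delta>) powr k * (2*pi) powr k / (1-\<delta>)^DIM('a)) \<longlongrightarrow> (2*pi) powr k) (at_right 0)"
    by simp
  have "((\<lambda>\<delta>. (1-\<delta>) powr k * ((2*pi) powr k * sqrt (2*pi) - \<delta>) / ((1+\<delta>)^(DIM('a)-1) * sqrt (2*pi))) \<longlongrightarrow>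
      (1-0) powr k * ((2*pi) powr k * sqrt (2*pi) - 0) / ((1+0)^(DIM('a)-1) * sqrt (2*pi))) (at_right 0)"
    by (intro tendsto_intros) auto
  then show "((\<lambda>\<delta>. (1-\<delta>) powr k * ((2*pi) powr k * sqrt (2*pi) - \<delta>) / ((1+\<delta>)^(DIM('a)-1) * sqrt (2*pi)))
      \<longlongrightarrow> (2*pi) powr k) (at_right 0)"
    by simp
qed

lemma continuous_within_sphere_cap:
  fixes q :: "'a::euclidean_space" and \<rho> :: "'a \<Rightarrow> real"
  assumes q: "norm q = 1" and cont: "continuous (at q within sphere 0 1) \<rho>" and \<epsilon>: "\<epsilon> > 0"
  obtains \<eta> where "\<eta> > 0" "\<And>y. norm y = 1 \<Longrightarrow> 1 - inner q y < \<eta> \<Longrightarrow> \<bar>\<rho> y - \<rho> q\<bar> < \<epsilon>"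
proof -
  obtain \<delta> where \<delta>: "\<delta> > 0" "\<And>y. y \<in> sphere 0 1 \<Longrightarrow> dist y q < \<delta> \<Longrightarrow> dist (\<rho> y) (\<rho> q) < \<epsilon>"
    using cont \<epsilon> unfolding continuous_within_eps_delta by blast
  show ?thesis
  proof
    show "\<delta>\<^sup>2 / 2 > 0" using \<delta> by simp
    fix y :: 'a assume y: "norm y = 1" "1 - inner q y < \<delta>\<^sup>2 / 2"
    have "inner q q = 1" "inner y y = 1"
      using q y(1) by (metis power2_norm_eq_inner power_one)+
    then have "(dist y q)\<^sup>2 = 2 * (1 - inner q y)"
      by (simp add: dist_norm power2_norm_eq_inner inner_diff_left inner_diff_right inner_commute)
    also have "\<dots> < \<delta>\<^sup>2" using y(2) by simp
    finally have "dist y q < \<delta>" using \<delta> by (simp add: power_less_imp_less_base)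
    then show "\<bar>\<rho> y - \<rho> q\<bar> < \<epsilon>" using \<delta>(2)[of y] y(1) by (simp add: dist_real_def)
  qed
qed

definition weighted_sphere_laplace :: "('a::euclidean_space \<Rightarrow> real) \<Rightarrow> 'a \<Rightarrow> real \<Rightarrow> real" where
  "weighted_sphere_laplace \<rho> q s = (\<integral> y. \<rho> y * exp (- s * (1 - inner q y)) \<partial>sphere_surface_measure)"

context
  fixes \<rho> :: "'a::euclidean_space \<Rightarrow> real"
  assumes rho_meas [measurable]: "\<rho> \<in> borel_measurable borel"
    and rho_nonneg: "\<forall>x\<in>sphere 0 1. \<rho> x \<ge> 0"
    and rho_int: "(\<integral>\<^sup>+ x. ennreal (\<rho> x) \<partial>sphere_surface_measure) = 1"
begin

lemma AE_sphere_density_nonneg: "AE y in sphere_surface_measure. 0 \<le> \<rho> y"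
  using AE_sphere_surface_measure_norm by eventually_elim (use rho_nonneg in auto)

lemma integrable_sphere_density: "integrable sphere_surface_measure \<rho>"
  by (rule integrableI_nonneg) (use AE_sphere_density_nonneg rho_int in auto)

lemma integral_sphere_density: "(\<integral> y. \<rho> y \<partial>sphere_surface_measure) = 1"
  using nn_integral_eq_integral[OF integrable_sphere_density AE_sphere_density_nonneg] rho_int by simp

lemma integrable_sphere_density_exp:
  fixes q :: 'a
  assumes q: "norm q = 1" and s: "s \<ge> 0"
  shows "integrable sphere_surface_measure (\<lambda>y. \<rho> y * exp (- s * (1 - inner q y)))"
proof (rule Bochner_Integration.integrable_bound[OF integrable_sphere_density])
  show "AE y in sphere_surface_measure. norm (\<rho> y * exp (- s * (1 - inner q y))) \<le> norm (\<rho> y)"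
    using AE_sphere_surface_measure_inner_le_1[OF q] AE_sphere_density_nonneg
  proof eventually_elim
    case (elim y)
    then have "exp (- s * (1 - inner q y)) \<le> 1" using s by (simp add: mult_nonneg_nonneg)
    then show ?case using elim by (simp add: abs_mult mult_left_le)
  qed
qed measurable

text \<open>Near \<open>q\<close> the density is within \<open>\<epsilon>\<close> of \<open>\<rho> q\<close>; on the rest of the sphere the exponential is
  at most \<open>exp (- s * \<eta>)\<close>.\<close>

lemma weighted_sphere_laplace_deviation:
  fixes q :: 'a
  assumes q: "norm q = 1" and s: "s \<ge> 0" and \<epsilon>: "\<epsilon> \<ge> 0"
    and near: "\<And>y. norm y = 1 \<Longrightarrow> 1 - inner q y < \<eta> \<Longrightarrow> \<bar>\<rho> y - \<rho> q\<bar> \<le> \<epsilon>"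
  shows "\<bar>weighted_sphere_laplace \<rho> q s - \<rho> q * sphere_laplace q s\<bar>
     \<le> \<epsilon> * sphere_laplace q s + exp (- s * \<eta>) * (1 + \<rho> q * measure (sphere_surface_measure :: 'a measure) UNIV)"
proof -
  let ?\<sigma> = "sphere_surface_measure :: 'a measure"
  let ?e = "\<lambda>y. exp (- s * (1 - inner q y))"
  interpret finite_measure ?\<sigma> by (rule finite_measure_sphere_surface_measure)
  have rq: "\<rho> q \<ge> 0" using rho_nonneg q by auto
  have "weighted_sphere_laplace \<rho> q s - \<rho> q * sphere_laplace q s = (\<integral> y. (\<rho> y - \<rho> q) * ?e y \<partial>?\<sigma>)"
    unfolding weighted_sphere_laplace_def sphere_laplace_def
    using integrable_sphere_density_exp[OF q s] integrable_sphere_exp[OF q s]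
    by (simp add: left_diff_distrib)
  also have "\<bar>\<dots>\<bar> \<le> (\<integral> y. \<bar>(\<rho> y - \<rho> q) * ?e y\<bar> \<partial>?\<sigma>)"
    by (rule integral_abs_bound)
  also have "\<dots> \<le> (\<integral> y. \<epsilon> * ?e y + exp (- s * \<eta>) * (\<rho> y + \<rho> q) \<partial>?\<sigma>)"
  proof (rule integral_mono_AE)
    show "integrable ?\<sigma> (\<lambda>y. \<bar>(\<rho> y - \<rho> q) * ?e y\<bar>)"
      using integrable_sphere_density_exp[OF q s] integrable_sphere_exp[OF q s]
      by (intro integrable_abs) (simp add: left_diff_distrib)
    show "integrable ?\<sigma> (\<lambda>y. \<epsilon> * ?e y + exp (- s * \<eta>) * (\<rho> y + \<rho> q))"
      using integrable_sphere_exp[OF q s] integrable_sphere_density by auto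
    show "AE y in ?\<sigma>. \<bar>(\<rho> y - \<rho> q) * ?e y\<bar> \<le> \<epsilon> * ?e y + exp (- s * \<eta>) * (\<rho> y + \<rho> q)"
      using AE_sphere_surface_measure_inner_le_1[OF q] AE_sphere_density_nonneg
    proof eventually_elim
      case (elim y)
      show ?case
      proof (cases "1 - inner q y < \<eta>")
        case True
        then have "\<bar>(\<rho> y - \<rho> q) * ?e y\<bar> \<le> \<epsilon> * ?e y"
          using near elim by (simp add: abs_mult mult_right_mono)
        moreover have "0 \<le> exp (- s * \<eta>) * (\<rho> y + \<rho> q)" using elim rq by simp
        ultimately show ?thesis by linarith
      next
        case False
        then have "?e y \<le> exp (- s * \<eta>)" using s by (simp add: mult_left_mono)
        moreover have "\<bar>\<rho> y - \<rho> q\<bar> \<le> \<rho> y + \<rho> q" using elim rq by auto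
        ultimately have "\<bar>(\<rho> y - \<rho> q) * ?e y\<bar> \<le> exp (- s * \<eta>) * (\<rho> y + \<rho> q)"
          by (simp add: abs_mult mult.commute mult_mono)
        moreover have "0 \<le> \<epsilon> * ?e y" using \<epsilon> by simp
        ultimately show ?thesis by linarith
      qed
    qed
  qed
  also have "\<dots> = \<epsilon> * sphere_laplace q s + exp (- s * \<eta>) * (1 + \<rho> q * measure ?\<sigma> UNIV)"
    unfolding sphere_laplace_def using integrable_sphere_exp[OF q s] integrable_sphere_density
    by (simp add: integral_sphere_density algebra_simps)
  finally show ?thesis .
qed

lemma weighted_sphere_laplace_asymptotics:
  fixes q :: 'a
  defines "k \<equiv> (real DIM('a) - 1) / 2"
  assumes q: "norm q = 1" and cont: "continuous (at q within sphere 0 1) \<rho>"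
  shows "((\<lambda>s. s powr k * weighted_sphere_laplace \<rho> q s) \<longlongrightarrow> \<rho> q * (2*pi) powr k) at_top"
proof -
  define W where "W = (2*pi) powr k"
  define K0 where "K0 = 1 + \<rho> q * measure (sphere_surface_measure :: 'a measure) UNIV"
  have A: "((\<lambda>s. s powr k * sphere_laplace q s) \<longlongrightarrow> W) at_top"
    unfolding W_def k_def by (rule sphere_laplace_asymptotics[OF q])
  have "((\<lambda>s. s powr k * weighted_sphere_laplace \<rho> q s - \<rho> q * (s powr k * sphere_laplace q s)) \<longlongrightarrow> 0) at_top"
  proof (rule tendstoI)
    fix e :: real assume e: "e > 0"
    have W: "W + 2 > 0" by (simp add: W_def add_nonneg_pos)
    obtain \<epsilon> where "0 < \<epsilon>" "\<epsilon> < e / (W + 2)"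
      using dense[of 0 "e / (W + 2)"] e W by auto
    moreover from this(2) W have "\<epsilon> * (W + 2) < e"
      by (simp only: pos_less_divide_eq)
    ultimately have \<epsilon>: "\<epsilon> > 0" "\<epsilon> * (W + 1) + \<epsilon> < e"
      by (simp_all add: algebra_simps)
    obtain \<eta> where \<eta>: "\<eta> > 0" "\<And>y. norm y = 1 \<Longrightarrow> 1 - inner q y < \<eta> \<Longrightarrow> \<bar>\<rho> y - \<rho> q\<bar> < \<epsilon>"
      using continuous_within_sphere_cap[OF q cont \<epsilon>(1)] by blast
    have "((\<lambda>s. s powr k * exp (- s * \<eta>) * K0) \<longlongrightarrow> 0) at_top"
      using tendsto_mult_right_zero[of "\<lambda>s. s powr k * exp (- s * \<eta>)" at_top K0] \<eta>(1) by real_asymp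
    from order_tendstoD(2)[OF this \<epsilon>(1)] order_tendstoD(2)[OF A less_add_one] eventually_ge_at_top[of 0]
    show "eventually (\<lambda>s. dist (s powr k * weighted_sphere_laplace \<rho> q s - \<rho> q * (s powr k * sphere_laplace q s)) 0 < e) at_top"
    proof eventually_elim
      case (elim s)
      have "\<bar>s powr k * weighted_sphere_laplace \<rho> q s - \<rho> q * (s powr k * sphere_laplace q s)\<bar>
          = \<bar>s powr k * (weighted_sphere_laplace \<rho> q s - \<rho> q * sphere_laplace q s)\<bar>"
        by (simp add: right_diff_distrib mult_ac)
      also have "\<dots> = s powr k * \<bar>weighted_sphere_laplace \<rho> q s - \<rho> q * sphere_laplace q s\<bar>"
        by (simp add: abs_mult)
      also have "\<dots> \<le> s powr k * (\<epsilon> * sphere_laplace q s + exp (- s * \<eta>) * K0)"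
        unfolding K0_def using weighted_sphere_laplace_deviation[OF q elim(3) _ less_imp_le[OF \<eta>(2)]] \<epsilon>
        by (intro mult_left_mono) auto
      also have "\<dots> = \<epsilon> * (s powr k * sphere_laplace q s) + s powr k * exp (- s * \<eta>) * K0"
        by (simp add: algebra_simps)
      also have "\<dots> < e"
        using elim \<epsilon> by (smt (verit) mult_left_mono)
      finally show ?case by (simp add: dist_real_def)
    qed
  qed
  from tendsto_add[OF this tendsto_mult_left[OF A, of "\<rho> q"]] show ?thesis
    by (simp add: W_def)
qed

end

section \<open>Second moment method\<close>

lemma (in prob_space) indep_var_of_indep_vars:
  assumes "indep_vars (\<lambda>_. borel) X I" "i \<in> I" "j \<in> I" "i \<noteq> j"
  shows "indep_var borel (X i) borel (X j)"
proof -
  have "indep_var borel ((\<lambda>f. f i) \<circ> (\<lambda>\<omega>. restrict (\<lambda>i. X i \<omega>) {i}))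
                  borel ((\<lambda>f. f j) \<circ> (\<lambda>\<omega>. restrict (\<lambda>i. X i \<omega>) {j}))"
    using assms by (intro indep_var_compose[OF indep_var_restrict[OF assms(1)]]) auto
  also have "(\<lambda>f. f i) \<circ> (\<lambda>\<omega>. restrict (\<lambda>i. X i \<omega>) {i}) = X i" by auto
  also have "(\<lambda>f. f j) \<circ> (\<lambda>\<omega>. restrict (\<lambda>i. X i \<omega>) {j}) = X j" by auto
  finally show ?thesis .
qed

lemma (in prob_space) variance_sum_pairwise_indep:
  fixes Y :: "'i \<Rightarrow> 'a \<Rightarrow> real"
  assumes J: "finite J"
    and Y [measurable]: "\<And>j. j \<in> J \<Longrightarrow> Y j \<in> borel_measurable M"
    and bounded: "\<And>j. j \<in> J \<Longrightarrow> AE \<omega> in M. \<bar>Y j \<omega>\<bar> \<le> B"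
    and indep: "\<And>i j. i \<in> J \<Longrightarrow> j \<in> J \<Longrightarrow> i \<noteq> j \<Longrightarrow> indep_var borel (Y i) borel (Y j)"
  shows "variance (\<lambda>\<omega>. \<Sum>j\<in>J. Y j \<omega>) = (\<Sum>j\<in>J. variance (Y j))"
proof -
  define C where "C j \<omega> = Y j \<omega> - expectation (Y j)" for j \<omega>
  have intY: "integrable M (Y j)" if "j \<in> J" for j
    using bounded[OF that] by (intro integrable_const_bound[of _ B]) (auto simp: that)
  have intC: "integrable M (\<lambda>\<omega>. C i \<omega> * C j \<omega>)" if "i \<in> J" "j \<in> J" for i j
  proof (rule integrable_const_bound[of _ "(B + \<bar>expectation (Y i)\<bar>) * (B + \<bar>expectation (Y j)\<bar>)"])
    show "AE \<omega> in M. norm (C i \<omega> * C j \<omega>) \<le> (B + \<bar>expectation (Y i)\<bar>) * (B + \<bar>expectation (Y j)\<bar>)"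
      using bounded[OF that(1)] bounded[OF that(2)]
      by eventually_elim (auto simp: C_def abs_mult intro!: mult_mono order.trans[OF abs_triangle_ineq4])
  qed (use that in \<open>simp add: C_def\<close>)
  have EC: "expectation (\<lambda>\<omega>. C i \<omega> * C j \<omega>) = (if i = j then variance (Y i) else 0)"
    if "i \<in> J" "j \<in> J" for i j
  proof (cases "i = j")
    case False
    have "indep_var borel ((\<lambda>y. y - expectation (Y i)) \<circ> Y i) borel ((\<lambda>y. y - expectation (Y j)) \<circ> Y j)"
      by (rule indep_var_compose[OF indep[OF that False]]) auto
    then have "expectation (\<lambda>\<omega>. C i \<omega> * C j \<omega>) = expectation (C i) * expectation (C j)"
      unfolding C_def comp_def
      by (rule indep_var_lebesgue_integral) (use that intY in auto)
    moreover have "expectation (C i) = 0"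
      unfolding C_def using intY[OF that(1)] by (simp add: prob_space)
    ultimately show ?thesis
      using False by simp
  qed (simp add: C_def power2_eq_square)
  have "variance (\<lambda>\<omega>. \<Sum>j\<in>J. Y j \<omega>) = expectation (\<lambda>\<omega>. (\<Sum>j\<in>J. C j \<omega>)\<^sup>2)"
    using intY by (simp add: C_def sum_subtractf)
  also have "\<dots> = expectation (\<lambda>\<omega>. \<Sum>i\<in>J. \<Sum>j\<in>J. C i \<omega> * C j \<omega>)"
    by (simp add: power2_eq_square sum_product)
  also have "\<dots> = (\<Sum>i\<in>J. \<Sum>j\<in>J. expectation (\<lambda>\<omega>. C i \<omega> * C j \<omega>))"
    using intC by (simp add: integral_sum)
  also have "\<dots> = (\<Sum>j\<in>J. variance (Y j))"
    using J by (simp add: EC)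
  finally show ?thesis .
qed

lemma (in prob_space) conv_in_prob_div_expectation:
  assumes [measurable]: "\<And>n. Z n \<in> borel_measurable M"
    and int: "\<And>n. integrable M (\<lambda>\<omega>. (Z n \<omega>)\<^sup>2)"
    and nz: "eventually (\<lambda>n. expectation (Z n) \<noteq> 0) sequentially"
    and ratio: "(\<lambda>n. variance (Z n) / (expectation (Z n))\<^sup>2) \<longlonglongrightarrow> 0"
  shows "conv_in_prob M (\<lambda>n \<omega>. Z n \<omega> / expectation (Z n)) (\<lambda>_. 1)"
  unfolding conv_in_prob_def
proof (intro allI impI)
  fix e :: real assume e: "e > 0"
  have lim: "(\<lambda>n. variance (Z n) / (expectation (Z n))\<^sup>2 / e\<^sup>2) \<longlonglongrightarrow> 0"
    using tendsto_divide[OF ratio tendsto_const[of "e\<^sup>2"]] e by simp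
  have "eventually (\<lambda>n. prob {\<omega>\<in>space M. \<bar>Z n \<omega> / expectation (Z n) - 1\<bar> > e}
      \<le> variance (Z n) / (expectation (Z n))\<^sup>2 / e\<^sup>2) sequentially"
    using nz
  proof eventually_elim
    case (elim n)
    let ?E = "expectation (Z n)"
    have "{\<omega>\<in>space M. \<bar>Z n \<omega> / ?E - 1\<bar> > e} \<subseteq> {\<omega>\<in>space M. e * \<bar>?E\<bar> \<le> \<bar>Z n \<omega> - ?E\<bar>}"
    proof safe
      fix \<omega> assume "\<bar>Z n \<omega> / ?E - 1\<bar> > e"
      moreover have "Z n \<omega> / ?E - 1 = (Z n \<omega> - ?E) / ?E"
        using elim by (simp add: diff_divide_distrib)
      ultimately have "e < \<bar>Z n \<omega> - ?E\<bar> / \<bar>?E\<bar>"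
        by (simp add: abs_divide)
      then show "e * \<bar>?E\<bar> \<le> \<bar>Z n \<omega> - ?E\<bar>"
        using elim by (simp add: pos_less_divide_eq)
    qed
    then have "prob {\<omega>\<in>space M. \<bar>Z n \<omega> / ?E - 1\<bar> > e} \<le> prob {\<omega>\<in>space M. e * \<bar>?E\<bar> \<le> \<bar>Z n \<omega> - ?E\<bar>}"
      by (intro finite_measure_mono) measurable
    also have "\<dots> \<le> variance (Z n) / (e * \<bar>?E\<bar>)\<^sup>2"
      using elim e by (intro Chebyshev_inequality int) auto
    finally show ?case
      by (simp add: power_mult_distrib mult_ac)
  qed
  then show "(\<lambda>n. prob {\<omega>\<in>space M. \<bar>Z n \<omega> / expectation (Z n) - 1\<bar> > e}) \<longlonglongrightarrow> 0"
    by (intro tendsto_sandwich[OF _ _ tendsto_const lim]) auto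
qed

lemma conv_in_prob_mult_tendsto_1:
  assumes P: "prob_space M"
    and Y [measurable]: "\<And>n. Y n \<in> borel_measurable M"
    and conv: "conv_in_prob M Y (\<lambda>_. 1)"
    and c: "c \<longlonglongrightarrow> 1"
    and ev: "eventually (\<lambda>n. \<forall>\<omega>\<in>space M. Y' n \<omega> = Y n \<omega> * c n) sequentially"
  shows "conv_in_prob M Y' (\<lambda>_. 1)"
  unfolding conv_in_prob_def
proof (intro allI impI)
  interpret prob_space M by (rule P)
  fix e :: real assume e: "e > 0"
  have lim: "(\<lambda>n. prob {\<omega>\<in>space M. \<bar>Y n \<omega> - 1\<bar> > e/4}) \<longlonglongrightarrow> 0"
    by (rule conv[unfolded conv_in_prob_def, rule_format]) (use e in simp)
  have "eventually (\<lambda>n. dist (c n) 1 < min (e/2) 1) sequentially"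
    using tendstoD[OF c, of "min (e/2) 1"] e by auto
  then have evc: "eventually (\<lambda>n. \<bar>c n - 1\<bar> < e/2 \<and> \<bar>c n\<bar> \<le> 2) sequentially"
    by eventually_elim (auto simp: dist_real_def)
  have "eventually (\<lambda>n. prob {\<omega>\<in>space M. \<bar>Y' n \<omega> - 1\<bar> > e} \<le> prob {\<omega>\<in>space M. \<bar>Y n \<omega> - 1\<bar> > e/4}) sequentially"
    using ev evc
  proof eventually_elim
    case (elim n)
    have "{\<omega>\<in>space M. \<bar>Y' n \<omega> - 1\<bar> > e} \<subseteq> {\<omega>\<in>space M. \<bar>Y n \<omega> - 1\<bar> > e/4}"
    proof safe
      fix \<omega> assume \<omega>: "\<omega> \<in> space M" "\<bar>Y' n \<omega> - 1\<bar> > e"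
      have "Y' n \<omega> - 1 = c n * (Y n \<omega> - 1) + (c n - 1)" using elim \<omega> by (simp add: algebra_simps)
      then have "\<bar>Y' n \<omega> - 1\<bar> \<le> \<bar>c n\<bar> * \<bar>Y n \<omega> - 1\<bar> + \<bar>c n - 1\<bar>"
        by (simp add: abs_mult[symmetric] abs_triangle_ineq)
      moreover have "\<bar>c n\<bar> * \<bar>Y n \<omega> - 1\<bar> \<le> 2 * \<bar>Y n \<omega> - 1\<bar>"
        using elim by (intro mult_right_mono) auto
      ultimately show "\<bar>Y n \<omega> - 1\<bar> > e/4"
        using \<omega>(2) conjunct1[OF elim(2)] by linarith
    qed
    then show ?case
      by (intro finite_measure_mono) measurable
  qed
  then show "(\<lambda>n. prob {\<omega>\<in>space M. \<bar>Y' n \<omega> - 1\<bar> > e}) \<longlonglongrightarrow> 0"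
    by (intro tendsto_sandwich[OF _ _ tendsto_const lim]) auto
qed

lemma conv_in_prob_div_tendsto:
  assumes P: "prob_space M" and [measurable]: "\<And>n. Y n \<in> borel_measurable M"
    and conv: "conv_in_prob M (\<lambda>n \<omega>. Y n \<omega> / a n) (\<lambda>_. 1)"
    and lim: "(\<lambda>n. a n / b n) \<longlonglongrightarrow> 1"
  shows "conv_in_prob M (\<lambda>n \<omega>. Y n \<omega> / b n) (\<lambda>_. 1)"
  by (rule conv_in_prob_mult_tendsto_1[OF P _ conv lim])
     (use order_tendstoD(1)[OF lim zero_less_one] in \<open>auto elim!: eventually_mono\<close>)

lemma second_moment_ratio_tendsto_0:
  fixes m :: "real \<Rightarrow> real" and \<beta> :: "nat \<Rightarrow> real" and \<alpha> k K :: real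
  assumes m: "((\<lambda>s. s powr k * m s) \<longlongrightarrow> K) at_top" and K: "K > 0" and k: "k > 0" "\<alpha> * k = 1"
    and \<beta>_pos: "\<And>n. \<beta> n > 0" and \<beta>_inf: "filterlim \<beta> at_top sequentially"
    and \<beta>_small: "(\<lambda>n. \<beta> n * real n powr (- \<alpha>)) \<longlonglongrightarrow> 0"
  shows "(\<lambda>n. real n * m (2 * \<beta> n) / (real n * m (\<beta> n))\<^sup>2) \<longlonglongrightarrow> 0"
proof -
  have m1: "(\<lambda>n. \<beta> n powr k * m (\<beta> n)) \<longlonglongrightarrow> K"
    by (rule filterlim_compose[OF m \<beta>_inf])
  have "filterlim (\<lambda>n. 2 * \<beta> n) at_top sequentially"
    by (rule filterlim_tendsto_pos_mult_at_top[OF tendsto_const _ \<beta>_inf]) simp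
  then have m2: "(\<lambda>n. (2 * \<beta> n) powr k * m (2 * \<beta> n)) \<longlonglongrightarrow> K"
    by (rule filterlim_compose[OF m])
  have small: "(\<lambda>n. (\<beta> n * real n powr (- \<alpha>)) powr k) \<longlonglongrightarrow> 0"
    by (rule tendsto_zero_powrI[OF \<beta>_small tendsto_const _ k(1)])
       (use \<beta>_pos in \<open>auto intro!: always_eventually mult_nonneg_nonneg simp: less_imp_le\<close>)
  have "(\<lambda>n. (2 * \<beta> n) powr k * m (2 * \<beta> n) / (\<beta> n powr k * m (\<beta> n))\<^sup>2 * 2 powr (- k) *
      (\<beta> n * real n powr (- \<alpha>)) powr k) \<longlonglongrightarrow> K / K\<^sup>2 * 2 powr (- k) * 0"
    using K by (intro tendsto_intros m1 m2 small) auto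
  moreover have "eventually (\<lambda>n. (2 * \<beta> n) powr k * m (2 * \<beta> n) / (\<beta> n powr k * m (\<beta> n))\<^sup>2 * 2 powr (- k) *
      (\<beta> n * real n powr (- \<alpha>)) powr k = real n * m (2 * \<beta> n) / (real n * m (\<beta> n))\<^sup>2) sequentially"
    using order_tendstoD(1)[OF m1 K] eventually_gt_at_top[of 0]
  proof eventually_elim
    case (elim n)
    have b: "\<beta> n > 0" "\<beta> n powr k > 0" using \<beta>_pos[of n] by auto
    have "(\<beta> n * real n powr (- \<alpha>)) powr k = \<beta> n powr k * real n powr (- (\<alpha> * k))"
      using b elim by (simp add: powr_mult powr_powr)
    also have "\<dots> = \<beta> n powr k / real n"
      using k elim by (simp add: powr_minus_divide)
    finally have p1: "(\<beta> n * real n powr (- \<alpha>)) powr k = \<beta> n powr k / real n" .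
    have p2: "(2 * \<beta> n) powr k = 2 powr k * \<beta> n powr k" "2 powr (- k) = 1 / 2 powr k"
      using b by (simp_all add: powr_mult powr_minus_divide)
    have "m (\<beta> n) > 0"
      using elim b by (simp add: zero_less_mult_iff)
    then show ?case
      unfolding p1 p2 using elim b by (simp add: field_simps power2_eq_square)
  qed
  ultimately show ?thesis
    by (simp add: tendsto_cong)
qed

context prob_space
begin

context
  fixes X :: "nat \<Rightarrow> 'a \<Rightarrow> 'b::euclidean_space" and q :: 'b and \<rho> :: "'b \<Rightarrow> real"
  assumes q: "norm q = 1"
    and rho_meas [measurable]: "\<rho> \<in> borel_measurable borel"
    and rho_nonneg: "\<forall>x\<in>sphere 0 1. \<rho> x \<ge> 0"
    and rho_int: "(\<integral>\<^sup>+ x. ennreal (\<rho> x) \<partial>sphere_surface_measure) = 1"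
    and X_meas [measurable]: "\<And>i. X i \<in> measurable M borel"
    and X_indep: "indep_vars (\<lambda>_. borel) X UNIV"
    and X_law: "\<And>i. distr M borel (X i) = density sphere_surface_measure (\<lambda>x. ennreal (\<rho> x))"
begin

lemma AE_sample_exp_bounded:
  assumes "s \<ge> 0"
  shows "AE \<omega> in M. \<bar>exp (- s * (1 - inner q (X j \<omega>)))\<bar> \<le> 1"
proof -
  have "AE y in density sphere_surface_measure (\<lambda>x. ennreal (\<rho> x)). inner q y \<le> 1"
    using AE_sphere_surface_measure_inner_le_1[OF q] by (subst AE_density) (auto elim: eventually_mono)
  then have "AE \<omega> in M. inner q (X j \<omega>) \<le> 1"
    by (subst (asm) X_law[symmetric], subst (asm) AE_distr_iff) auto
  then show ?thesis
    by eventually_elim (use assms in \<open>simp add: mult_nonneg_nonneg\<close>)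
qed

lemma integrable_sample_exp:
  "s \<ge> 0 \<Longrightarrow> integrable M (\<lambda>\<omega>. exp (- s * (1 - inner q (X j \<omega>))))"
  using AE_sample_exp_bounded by (intro integrable_const_bound[where B=1]) auto

lemma expectation_sample_exp:
  "expectation (\<lambda>\<omega>. exp (- s * (1 - inner q (X j \<omega>)))) = weighted_sphere_laplace \<rho> q s"
proof -
  have "expectation (\<lambda>\<omega>. exp (- s * (1 - inner q (X j \<omega>)))) =
      integral\<^sup>L (distr M borel (X j)) (\<lambda>y. exp (- s * (1 - inner q y)))"
    by (rule integral_distr[symmetric]) auto
  also have "\<dots> = (\<integral> y. \<rho> y *\<^sub>R exp (- s * (1 - inner q y)) \<partial>sphere_surface_measure)"
    unfolding X_law
    by (rule integral_density) (use AE_sphere_density_nonneg[OF rho_meas rho_nonneg rho_int] in auto)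
  finally show ?thesis
    by (simp add: weighted_sphere_laplace_def)
qed

lemma expectation_sample_exp_sum:
  assumes "s \<ge> 0"
  shows "expectation (\<lambda>\<omega>. \<Sum>j\<in>J. exp (- s * (1 - inner q (X j \<omega>)))) = card J * weighted_sphere_laplace \<rho> q s"
proof -
  have "expectation (\<lambda>\<omega>. \<Sum>j\<in>J. exp (- s * (1 - inner q (X j \<omega>)))) =
      (\<Sum>j\<in>J. expectation (\<lambda>\<omega>. exp (- s * (1 - inner q (X j \<omega>)))))"
    using integrable_sample_exp[OF assms] by simp
  then show ?thesis
    by (simp only: expectation_sample_exp) simp
qed

lemma integrable_sample_exp_sum_power2:
  assumes "s \<ge> 0" "finite J"
  shows "integrable M (\<lambda>\<omega>. (\<Sum>j\<in>J. exp (- s * (1 - inner q (X j \<omega>))))\<^sup>2)"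
proof (rule integrable_const_bound[where B = "(real (card J))\<^sup>2"])
  have "AE \<omega> in M. \<forall>j\<in>J. \<bar>exp (- s * (1 - inner q (X j \<omega>)))\<bar> \<le> 1"
    using assms by (intro eventually_ball_finite ballI AE_sample_exp_bounded) auto
  then show "AE \<omega> in M. norm ((\<Sum>j\<in>J. exp (- s * (1 - inner q (X j \<omega>))))\<^sup>2) \<le> (real (card J))\<^sup>2"
  proof eventually_elim
    case (elim \<omega>)
    have "\<bar>\<Sum>j\<in>J. exp (- s * (1 - inner q (X j \<omega>)))\<bar> \<le> (\<Sum>j\<in>J. 1)"
      using elim by (intro order.trans[OF sum_abs sum_mono]) auto
    then have "\<bar>\<Sum>j\<in>J. exp (- s * (1 - inner q (X j \<omega>)))\<bar>\<^sup>2 \<le> (real (card J))\<^sup>2"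
      by (intro power_mono) auto
    then show ?case
      by simp
  qed
qed measurable

lemma variance_sample_exp_sum_le:
  assumes s: "s \<ge> 0" and J: "finite J"
  shows "variance (\<lambda>\<omega>. \<Sum>j\<in>J. exp (- s * (1 - inner q (X j \<omega>)))) \<le> card J * weighted_sphere_laplace \<rho> q (2 * s)"
proof -
  let ?Y = "\<lambda>j \<omega>. exp (- s * (1 - inner q (X j \<omega>)))"
  have "variance (\<lambda>\<omega>. \<Sum>j\<in>J. ?Y j \<omega>) = (\<Sum>j\<in>J. variance (?Y j))"
  proof (rule variance_sum_pairwise_indep[OF J _ AE_sample_exp_bounded[OF s]])
    show "indep_var borel (?Y i) borel (?Y j)" if "i \<noteq> j" for i j
      using indep_var_compose[OF indep_var_of_indep_vars[OF X_indep _ _ that],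
          of "\<lambda>y. exp (- s * (1 - inner q y))" borel "\<lambda>y. exp (- s * (1 - inner q y))" borel]
      by (simp add: comp_def)
  qed measurable
  also have "\<dots> \<le> (\<Sum>j\<in>J. weighted_sphere_laplace \<rho> q (2 * s))"
  proof (rule sum_mono)
    fix j
    have "(?Y j \<omega>)\<^sup>2 = exp (- (2 * s) * (1 - inner q (X j \<omega>)))" for \<omega>
      by (simp add: power2_eq_square exp_add[symmetric] algebra_simps)
    moreover have "integrable M (\<lambda>\<omega>. exp (- (2 * s) * (1 - inner q (X j \<omega>))))"
      using s by (intro integrable_sample_exp) auto
    ultimately have "variance (?Y j) = weighted_sphere_laplace \<rho> q (2 * s) - (weighted_sphere_laplace \<rho> q s)\<^sup>2"
      using variance_eq[OF integrable_sample_exp[OF s]] by (simp only: expectation_sample_exp)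
    then show "variance (?Y j) \<le> weighted_sphere_laplace \<rho> q (2 * s)"
      by simp
  qed
  finally show ?thesis by simp
qed

lemma expectation_sample_sum_asymptotics:
  fixes \<beta> :: "nat \<Rightarrow> real" and k K :: real
  defines "Z \<equiv> \<lambda>n \<omega>. \<Sum>j=1..n. exp (- \<beta> n * (1 - inner q (X j \<omega>)))"
  assumes m: "((\<lambda>s. s powr k * weighted_sphere_laplace \<rho> q s) \<longlongrightarrow> K) at_top" and K: "K > 0"
    and \<beta>_pos: "\<And>n. \<beta> n > 0" and \<beta>_inf: "filterlim \<beta> at_top sequentially"
  shows "(\<lambda>n. expectation (Z n) / (K * real n / \<beta> n powr k)) \<longlonglongrightarrow> 1"
proof -
  have EZ: "expectation (Z n) = real n * weighted_sphere_laplace \<rho> q (\<beta> n)" for n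
    unfolding Z_def using expectation_sample_exp_sum[OF less_imp_le[OF \<beta>_pos], where J="{1..n}"] by simp
  have "(\<lambda>n. \<beta> n powr k * weighted_sphere_laplace \<rho> q (\<beta> n) / K) \<longlonglongrightarrow> 1"
    using tendsto_divide[OF filterlim_compose[OF m \<beta>_inf] tendsto_const[of K]] K by simp
  moreover have "eventually (\<lambda>n. \<beta> n powr k * weighted_sphere_laplace \<rho> q (\<beta> n) / K =
      expectation (Z n) / (K * real n / \<beta> n powr k)) sequentially"
    using eventually_gt_at_top[of "0::nat"]
    by eventually_elim (use K \<beta>_pos in \<open>auto simp: EZ field_simps\<close>)
  ultimately show ?thesis
    by (rule Lim_transform_eventually)
qed

lemma conv_in_prob_sample_sum_div_expectation:
  fixes \<beta> :: "nat \<Rightarrow> real" and \<alpha> k K :: real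
  defines "Z \<equiv> \<lambda>n \<omega>. \<Sum>j=1..n. exp (- \<beta> n * (1 - inner q (X j \<omega>)))"
  assumes m: "((\<lambda>s. s powr k * weighted_sphere_laplace \<rho> q s) \<longlongrightarrow> K) at_top"
    and K: "K > 0" and k: "k > 0" "\<alpha> * k = 1"
    and \<beta>_pos: "\<And>n. \<beta> n > 0" and \<beta>_inf: "filterlim \<beta> at_top sequentially"
    and \<beta>_small: "(\<lambda>n. \<beta> n * real n powr (- \<alpha>)) \<longlonglongrightarrow> 0"
  shows "conv_in_prob M (\<lambda>n \<omega>. Z n \<omega> / expectation (Z n)) (\<lambda>_. 1)"
proof (rule conv_in_prob_div_expectation)
  have \<beta>: "\<beta> n \<ge> 0" for n using \<beta>_pos by (simp add: less_imp_le)
  have EZ: "expectation (Z n) = real n * weighted_sphere_laplace \<rho> q (\<beta> n)" for n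
    unfolding Z_def using expectation_sample_exp_sum[OF \<beta>, where J="{1..n}"] by simp
  show "integrable M (\<lambda>\<omega>. (Z n \<omega>)\<^sup>2)" for n
    unfolding Z_def by (rule integrable_sample_exp_sum_power2[OF \<beta>]) simp
  show "eventually (\<lambda>n. expectation (Z n) \<noteq> 0) sequentially"
    using order_tendstoD(1)[OF filterlim_compose[OF m \<beta>_inf] K] eventually_gt_at_top[of 0]
    by eventually_elim (use \<beta>_pos in \<open>auto simp: EZ zero_less_mult_iff\<close>)
  have "variance (Z n) \<le> real n * weighted_sphere_laplace \<rho> q (2 * \<beta> n)" for n
    unfolding Z_def using variance_sample_exp_sum_le[OF \<beta>, where J="{1..n}"] by simp
  then have "variance (Z n) / (expectation (Z n))\<^sup>2 \<le>
      real n * weighted_sphere_laplace \<rho> q (2 * \<beta> n) / (real n * weighted_sphere_laplace \<rho> q (\<beta> n))\<^sup>2" for n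
    unfolding EZ[symmetric] by (rule divide_right_mono) simp
  then show "(\<lambda>n. variance (Z n) / (expectation (Z n))\<^sup>2) \<longlonglongrightarrow> 0"
    by (intro tendsto_sandwich[OF _ _ tendsto_const second_moment_ratio_tendsto_0[OF m K k \<beta>_pos \<beta>_inf \<beta>_small]])
       (auto intro!: always_eventually variance_positive)
qed (simp add: Z_def)

end

end

lemma sphere_area_Gamma_eq:
  fixes d :: nat
  assumes d: "d \<ge> 2"
  defines "\<alpha> \<equiv> 2 / (real d - 1)"
  shows "2 powr (1 / \<alpha>) * sphere_area (d - 2) / (real d - 1) * r * Gamma (1 / \<alpha> + 1)
         = r * (2*pi) powr ((real d - 1) / 2)"
proof -
  define k where "k = (real d - 1) / 2"
  have k: "k > 0" using d by (simp add: k_def)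
  have "real (d - 2 + 1) = real d - 1" using d by (simp add: of_nat_diff)
  then have sa: "sphere_area (d - 2) = (real d - 1) * (pi powr k / Gamma (k + 1))"
    unfolding sphere_area_def unit_ball_vol_def by (simp add: k_def)
  have "Gamma (k + 1) > 0" using k by (intro Gamma_real_pos) auto
  moreover have "1 / \<alpha> = k" by (simp add: \<alpha>_def k_def)
  ultimately show ?thesis
    unfolding sa k_def[symmetric] using d by (simp add: powr_mult field_simps)
qed

lemma C2_on_sphere_continuous_within:
  fixes \<rho> :: "'a::euclidean_space \<Rightarrow> real"
  assumes "C2_on_sphere \<rho>" and q: "q \<in> sphere 0 1"
  shows "continuous (at q within sphere 0 1) \<rho>"
proof -
  obtain U g where U: "sphere 0 1 \<subseteq> U" "C2_on U g" "\<forall>x\<in>sphere 0 1. g x = \<rho> x"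
    using assms unfolding C2_on_sphere_def by blast
  then obtain D :: "'a \<Rightarrow> ('a \<Rightarrow>\<^sub>L real)" where "\<forall>x\<in>U. (g has_derivative blinfun_apply (D x)) (at x)"
    unfolding C2_on_def by blast
  with U(1) q have "(g has_derivative blinfun_apply (D q)) (at q)"
    by auto
  then have "continuous (at q) g"
    by (rule has_derivative_continuous)
  then show ?thesis
    by (rule continuous_transform_within[OF continuous_at_imp_continuous_within zero_less_one])
       (use q U(3) in auto)
qed

theorem mainTheorem10:
  fixes M :: "'s measure"
    and X :: "nat \<Rightarrow> 's \<Rightarrow> real ^ 'n"
    and \<rho> :: "real ^ 'n \<Rightarrow> real"
    and q :: "real ^ 'n"
    and \<beta> :: "nat \<Rightarrow> real"
  defines "d \<equiv> CARD('n)"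
  defines "\<alpha> \<equiv> 2 / (real d - 1)"
  defines "Z \<equiv> (\<lambda>n \<omega>. \<Sum>j=1..n. exp (- \<beta> n * (1 - inner q (X j \<omega>))))"
  defines "Cq \<equiv> 2 powr (1 / \<alpha>) * sphere_area (d - 2) / (real d - 1) * \<rho> q"
  assumes d2: "d \<ge> 2"
    and P: "prob_space M"
    and rho_meas: "\<rho> \<in> borel_measurable borel"
    and rho_nonneg: "\<forall>x\<in>sphere 0 1. \<rho> x \<ge> 0"
    and rho_C2: "C2_on_sphere \<rho>"
    and rho_int: "(\<integral>\<^sup>+ x. ennreal (\<rho> x) \<partial>sphere_surface_measure) = 1"
    and q_sph: "q \<in> sphere 0 1"
    and rho_q: "\<rho> q > 0"
    and X_meas: "\<forall>i. X i \<in> measurable M borel"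
    and X_indep: "prob_space.indep_vars M (\<lambda>_. borel) X UNIV"
    and X_law: "\<forall>i. distr M borel (X i) = density sphere_surface_measure (\<lambda>x. ennreal (\<rho> x))"
    and beta_pos: "\<forall>n. \<beta> n > 0"
    and beta_inf: "filterlim \<beta> at_top sequentially"
    and beta_small: "(\<lambda>n. \<beta> n * real n powr (- \<alpha>)) \<longlonglongrightarrow> 0"
  shows "conv_in_prob M (\<lambda>n \<omega>. Z n \<omega> / prob_space.expectation M (Z n)) (\<lambda>_. 1)
       \<and> conv_in_prob M
           (\<lambda>n \<omega>. Z n \<omega> / (Cq * real n * \<beta> n powr (- 1 / \<alpha>) * Gamma (1 / \<alpha> + 1)))
           (\<lambda>_. 1)"
proof -
  interpret prob_space M by (rule P)
  define k where "k = (real d - 1) / 2"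
  define K where "K = \<rho> q * (2*pi) powr k"
  have q: "norm q = 1" using q_sph by simp
  have k: "k > 0" "\<alpha> * k = 1" "1 / \<alpha> = k" using d2 by (auto simp: k_def \<alpha>_def)
  have K: "K > 0" using rho_q by (simp add: K_def)
  have m: "((\<lambda>s. s powr k * weighted_sphere_laplace \<rho> q s) \<longlongrightarrow> K) at_top"
    using weighted_sphere_laplace_asymptotics[OF rho_meas rho_nonneg rho_int q
        C2_on_sphere_continuous_within[OF rho_C2 q_sph]]
    by (simp add: K_def k_def d_def)
  note sample = q rho_meas rho_nonneg rho_int X_meas[rule_format] X_indep X_law[rule_format]
  note X_meas[rule_format, measurable]
  have concentration: "conv_in_prob M (\<lambda>n \<omega>. Z n \<omega> / expectation (Z n)) (\<lambda>_. 1)"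
    unfolding Z_def using beta_pos
    by (intro conv_in_prob_sample_sum_div_expectation[OF sample m K k(1,2) _ beta_inf beta_small]) auto
  have "Cq * Gamma (1 / \<alpha> + 1) = K"
    unfolding Cq_def K_def k_def by (rule sphere_area_Gamma_eq[OF d2, folded \<alpha>_def])
  then have den: "Cq * real n * \<beta> n powr (- 1 / \<alpha>) * Gamma (1 / \<alpha> + 1) = K * real n / \<beta> n powr k" for n
    using k by (simp add: powr_minus field_simps)
  have lim: "(\<lambda>n. expectation (Z n) / (Cq * real n * \<beta> n powr (- 1 / \<alpha>) * Gamma (1 / \<alpha> + 1)))
      \<longlonglongrightarrow> 1"
    unfolding den Z_def using beta_pos
    by (intro expectation_sample_sum_asymptotics[OF sample m K _ beta_inf]) auto
  have Z_meas: "Z n \<in> borel_measurable M" for n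
    unfolding Z_def by measurable
  from conv_in_prob_div_tendsto[OF P Z_meas concentration lim] concentration show ?thesis
    by simp
qed
end
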